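(* Let $k$ be a field with a non-archimedean absolute value $v:k\to\mathbb T$. Let $A_0$ be the monoid (with an adjoined zero) of an affine toric $k$-variety $\operatorname{Spec}k[A_0]^+$, let $R$ be a $k$-algebra and $\pi:k[A_0]^+\to R$ a surjective $k$-algebra homomorphism (a closed embedding $\iota:Y=\operatorname{Spec}R\to\operatorname{Spec}k[A_0]^+$). Let $B$ be the blueprint with $B^+=R$ (trivially ordered) and $B^\bullet=\{\pi(c\,a): c\in k,\ a\in A_0\}$, and let $\beta:B\to R$ be the inclusion (with $R$ viewed as the trivially ordered blueprint with $R^\bullet=R^+=R$). Then: (1) the Berkovich space $Y^{\mathrm{an}}$ is naturally homeomorphic to $\mathrm{Hom}_{\mathbb T}(\mathrm{Bend}_v(R),\mathbb T)$, via $w\mapsto (r\otimes t\mapsto w(r)t)$; (2) the Kajiwara–Payne tropicalization $\mathrm{Trop}^{KP}_{v,\iota}(Y)$ is naturally homeomorphic to $\mathrm{Hom}_{\mathbb T}(\mathrm{Bend}_v(B),\mathbb T)$, via the map sending $f:\mathrm{Bend}_v(B)\to\mathbb T$ to the monoid morphism $a\mapsto f(\pi(a)\otimes1)$; (3) the square whose top arrow is $\mathrm{trop}^{KP}_{v,\iota}:Y^{\mathrm{an}}\to\mathrm{Trop}^{KP}_{v,\iota}(Y)$, whose vertical arrows are these homeomorphisms and whose bottom arrow is precomposition with $\mathrm{Bend}_v(\beta):\mathrm{Bend}_v(B)\to\mathrm{Bend}_v(R)$, is a commutative diagram of continuous maps.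
   Context: $\mathbb T$ (tropical numbers) is the semiring $\mathbb R_{\ge0}$ with usual multiplication and addition $a+b=\max\{a,b\}$, with the real topology. A non-archimedean absolute value $v:k\to\mathbb T$ is a multiplicative map with $v(0)=0$, $v(1)=1$, $v(a+b)\le\max\{v(a),v(b)\}$. $k[A_0]^+$ denotes the monoid algebra of $A_0$ over $k$ with the zero of $A_0$ identified with $0$. Berkovich space: $Y^{\mathrm{an}}$ is the set of multiplicative maps $w:R\to\mathbb R_{\ge0}$ with $w(0)=0$, $w(1)=1$, $w(a+b)\le\max\{w(a),w(b)\}$ and $w|_k=v$, with the coarsest topology making all $w\mapsto w(r)$ ($r\in R$) continuous. $\mathrm{Hom}(A_0,\mathbb T)$ is the set of monoid morphisms preserving $0$ and $1$, with the topology of pointwise convergence; $\mathrm{trop}^{KP}_{v,\iota}(w)=(a\mapsto w(\pi(a)))$ and $\mathrm{Trop}^{KP}_{v,\iota}(Y)$ is its image with the subspace topology. Ordered blueprints: pairs of an ordered semiring $B^+$ (commutative, partial order compatible with $+$ and $\cdot$) and a multiplicatively closed generating subset $B^\bullet\ni0,1$; morphisms are order-preserving semiring homomorphisms preserving $\bullet$. Rings/semirings are viewed as trivially ordered with $R^\bullet=R$; $k$ is a $k$-algebra, $\mathbb T$ an ordered blue $\mathbb T$-algebra. The valuation $v$ is a valuation in the sense: multiplicative map on underlying monoids with $a\le \sum b_j$ implying $v(a)\le\sum v(b_j)$ in the natural order of $\mathbb T$. For an ordered blue $k$-algebra $C$, $\mathrm{Bend}_v(C)$ is the ordered blue $\mathbb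 T$-algebra with underlying monoid $C^\bullet\otimes_{k^\bullet}\mathbb T$ (elements $c\otimes t$, $(\lambda c)\otimes t=c\otimes v(\lambda)t$ for $\lambda\in k$) and semiring the quotient of $\mathbb T[C^\bullet]^+$ by the congruence generated by $(v(\lambda)t)\cdot c=t\cdot(\lambda c)$ and $t a+\sum_j t b_j=\sum_j t b_j$ whenever $a\le\sum b_j$ in $C^+$. $\mathrm{Hom}_{\mathbb T}(\mathrm{Bend}_v(C),\mathbb T)$ (the $\mathbb T$-rational points of $\operatorname{Spec}\mathrm{Bend}_v(C)$) carries the coarsest topology making all evaluation maps $f\mapsto f(x)$ continuous. *)

theory Defs
  imports "HOL-Analysis.Analysis"
begin

text \<open>Elements of T are nonnegative reals; tropical addition is max.\<close>

definition nonarch_abs :: "('k::field \<Rightarrow> real) \<Rightarrow> bool" where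
  "nonarch_abs v \<longleftrightarrow> (\<forall>a. v a \<ge> 0) \<and> v 0 = 0 \<and> v 1 = 1 \<and>
     (\<forall>a b. v (a * b) = v a * v b) \<and> (\<forall>a b. v (a + b) \<le> max (v a) (v b))"

definition k_algebra_map :: "('k::field \<Rightarrow> 'r::comm_ring_1) \<Rightarrow> bool" where
  "k_algebra_map emb \<longleftrightarrow> emb 0 = 0 \<and> emb 1 = 1 \<and>
     (\<forall>a b. emb (a + b) = emb a + emb b) \<and> (\<forall>a b. emb (a * b) = emb a * emb b)"

text \<open>A0 = A with an adjoined zero, where A is a finitely generated, cancellative,
  torsion-free commutative monoid (the monoid of an affine toric variety).\<close>

definition toric_monoid0 :: "'a::{comm_monoid_mult,mult_zero,zero_neq_one} itself \<Rightarrow> bool" where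
  "toric_monoid0 _ \<longleftrightarrow>
     (\<forall>a b::'a. a * b = 0 \<longrightarrow> a = 0 \<or> b = 0) \<and>
     (\<forall>a b c::'a. c \<noteq> 0 \<longrightarrow> a * c = b * c \<longrightarrow> a = b) \<and>
     (\<forall>a b::'a. \<forall>n::nat. n > 0 \<longrightarrow> a ^ n = b ^ n \<longrightarrow> a = b) \<and>
     (\<exists>G::'a set. finite G \<and> 0 \<notin> G \<and>
        (\<forall>a::'a. a \<noteq> 0 \<longrightarrow> (\<exists>xs. set xs \<subseteq> G \<and> a = prod_list xs)))"

text \<open>A surjective k-algebra homomorphism k[A0]^+ \<rightarrow> R is, by the universal property
  of the monoid algebra, the same as a morphism of monoids with zero phi : A0 \<rightarrow> R
  (the restriction of pi to A0) whose image spans R over k.\<close>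

definition monoid0_hom :: "('a::{monoid_mult,zero} \<Rightarrow> 'b::{monoid_mult,zero}) \<Rightarrow> bool" where
  "monoid0_hom h \<longleftrightarrow> h 0 = 0 \<and> h 1 = 1 \<and> (\<forall>a b. h (a * b) = h a * h b)"

definition pi_surjective :: "('k::field \<Rightarrow> 'r::comm_ring_1) \<Rightarrow> ('a \<Rightarrow> 'r) \<Rightarrow> bool" where
  "pi_surjective emb phi \<longleftrightarrow>
     (\<forall>r::'r. \<exists>S c. finite S \<and> r = (\<Sum>a\<in>S. emb (c a) * phi a))"

definition Bbullet :: "('k::field \<Rightarrow> 'r::comm_ring_1) \<Rightarrow> ('a \<Rightarrow> 'r) \<Rightarrow> 'r set" where
  "Bbullet emb phi = {emb c * phi a | c a. True}"

definition berk :: "('k::field \<Rightarrow> real) \<Rightarrow> ('k \<Rightarrow> 'r::comm_ring_1) \<Rightarrow> ('r \<Rightarrow> real) set" where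
  "berk v emb = {w. (\<forall>r. w r \<ge> 0) \<and> w 0 = 0 \<and> w 1 = 1 \<and>
      (\<forall>a b. w (a * b) = w a * w b) \<and> (\<forall>a b. w (a + b) \<le> max (w a) (w b)) \<and>
      (\<forall>l. w (emb l) = v l)}"

definition berk_top :: "('k::field \<Rightarrow> real) \<Rightarrow> ('k \<Rightarrow> 'r::comm_ring_1) \<Rightarrow> ('r \<Rightarrow> real) topology" where
  "berk_top v emb = subtopology (product_topology (\<lambda>_. euclideanreal) UNIV) (berk v emb)"

definition monhom_T :: "('a::{monoid_mult,zero} \<Rightarrow> real) set" where
  "monhom_T = {h. (\<forall>a. h a \<ge> 0) \<and> h 0 = 0 \<and> h 1 = 1 \<and> (\<forall>a b. h (a * b) = h a * h b)}"

definition monhom_top :: "('a::{monoid_mult,zero} \<Rightarrow> real) topology" where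
  "monhom_top = subtopology (product_topology (\<lambda>_. euclideanreal) UNIV) monhom_T"

definition tropKP :: "('a \<Rightarrow> 'r) \<Rightarrow> ('r \<Rightarrow> real) \<Rightarrow> ('a \<Rightarrow> real)" where
  "tropKP phi w = (\<lambda>a. w (phi a))"

definition TropKP_top :: "('k::field \<Rightarrow> real) \<Rightarrow> ('k \<Rightarrow> 'r::comm_ring_1) \<Rightarrow> ('a::{monoid_mult,zero} \<Rightarrow> 'r)
     \<Rightarrow> ('a \<Rightarrow> real) topology" where
  "TropKP_top v emb phi = subtopology monhom_top (tropKP phi ` berk v emb)"

text \<open>Elements of T[M]^+ for M = C^bullet a subset of 'r: finitely supported
  T-valued coefficient functions with support in M (formal sums).\<close>

definition fsum :: "'c set \<Rightarrow> ('c \<Rightarrow> real) set" where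
  "fsum M = {x. (\<forall>m. x m \<ge> 0) \<and> finite {m. x m \<noteq> 0} \<and> {m. x m \<noteq> 0} \<subseteq> M}"

definition tzero :: "'c \<Rightarrow> real" where "tzero = (\<lambda>_. 0)"

definition tmono :: "real \<Rightarrow> 'c \<Rightarrow> ('c \<Rightarrow> real)" where
  "tmono t c = (\<lambda>m. if m = c then t else 0)"

definition tadd :: "('c \<Rightarrow> real) \<Rightarrow> ('c \<Rightarrow> real) \<Rightarrow> ('c \<Rightarrow> real)" where
  "tadd x y = (\<lambda>m. max (x m) (y m))"

definition tmul :: "('c::times \<Rightarrow> real) \<Rightarrow> ('c \<Rightarrow> real) \<Rightarrow> ('c \<Rightarrow> real)" where
  "tmul x y = (\<lambda>p. Max (insert 0 {x m * y n | m n. m * n = p \<and> x m \<noteq> 0 \<and> y n \<noteq> 0}))"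

definition tsum_list :: "('c \<Rightarrow> real) list \<Rightarrow> ('c \<Rightarrow> real)" where
  "tsum_list xs = foldr tadd xs tzero"

text \<open>The congruence on T[C^bullet]^+ defining Bend_v(C), for C a blueprint whose
  ambient semiring is the trivially ordered ring 'r and whose monoid is Cb \<subseteq> 'r
  (so a \<le> sum b_j in C^+ means a = sum b_j in 'r).\<close>

inductive_set bend_cong ::
  "('k::field \<Rightarrow> real) \<Rightarrow> ('k \<Rightarrow> 'r::comm_ring_1) \<Rightarrow> 'r set \<Rightarrow> (('r \<Rightarrow> real) \<times> ('r \<Rightarrow> real)) set"
  for v emb Cb where
  gen_scalar: "\<lbrakk>c \<in> Cb; t \<ge> 0\<rbrakk> \<Longrightarrow> (tmono (v l * t) c, tmono t (emb l * c)) \<in> bend_cong v emb Cb"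
| gen_order: "\<lbrakk>a \<in> Cb; set bs \<subseteq> Cb; a = sum_list bs; t \<ge> 0\<rbrakk> \<Longrightarrow>
     (tadd (tmono t a) (tsum_list (map (tmono t) bs)), tsum_list (map (tmono t) bs)) \<in> bend_cong v emb Cb"
| refl: "x \<in> fsum Cb \<Longrightarrow> (x, x) \<in> bend_cong v emb Cb"
| sym: "(x, y) \<in> bend_cong v emb Cb \<Longrightarrow> (y, x) \<in> bend_cong v emb Cb"
| trans: "\<lbrakk>(x, y) \<in> bend_cong v emb Cb; (y, z) \<in> bend_cong v emb Cb\<rbrakk> \<Longrightarrow> (x, z) \<in> bend_cong v emb Cb"
| add: "\<lbrakk>(x, y) \<in> bend_cong v emb Cb; (x', y') \<in> bend_cong v emb Cb\<rbrakk> \<Longrightarrow>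
     (tadd x x', tadd y y') \<in> bend_cong v emb Cb"
| mul: "\<lbrakk>(x, y) \<in> bend_cong v emb Cb; (x', y') \<in> bend_cong v emb Cb\<rbrakk> \<Longrightarrow>
     (tmul x x', tmul y y') \<in> bend_cong v emb Cb"

text \<open>Hom_T(Bend_v(C), T): T-algebra morphisms out of the quotient, represented by
  semiring morphisms T[C^bullet]^+ \<rightarrow> T (extensional on T[C^bullet]^+) that are
  constant on congruence classes and restrict to the identity on T.\<close>

definition bend_hom :: "('k::field \<Rightarrow> real) \<Rightarrow> ('k \<Rightarrow> 'r::comm_ring_1) \<Rightarrow> 'r set
     \<Rightarrow> (('r \<Rightarrow> real) \<Rightarrow> real) set" where
  "bend_hom v emb Cb = {f. f \<in> extensional (fsum Cb) \<and>
      (\<forall>x\<in>fsum Cb. f x \<ge> 0) \<and> f tzero = 0 \<and> f (tmono 1 1) = 1 \<and>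
      (\<forall>x\<in>fsum Cb. \<forall>y\<in>fsum Cb. f (tadd x y) = max (f x) (f y)) \<and>
      (\<forall>x\<in>fsum Cb. \<forall>y\<in>fsum Cb. f (tmul x y) = f x * f y) \<and>
      (\<forall>t\<ge>0. f (tmono t 1) = t) \<and>
      (\<forall>(x, y)\<in>bend_cong v emb Cb. f x = f y)}"

definition bend_top :: "('k::field \<Rightarrow> real) \<Rightarrow> ('k \<Rightarrow> 'r::comm_ring_1) \<Rightarrow> 'r set
     \<Rightarrow> (('r \<Rightarrow> real) \<Rightarrow> real) topology" where
  "bend_top v emb Cb = subtopology (product_topology (\<lambda>_. euclideanreal) (fsum Cb)) (bend_hom v emb Cb)"

text \<open>w \<mapsto> (r \<otimes> t \<mapsto> w(r) t), extended additively to formal sums.\<close>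

definition berk_to_bend :: "('r \<Rightarrow> real) \<Rightarrow> (('r \<Rightarrow> real) \<Rightarrow> real)" where
  "berk_to_bend w = restrict (\<lambda>x. Max (insert 0 {x m * w m | m. x m \<noteq> 0})) (fsum UNIV)"

text \<open>f \<mapsto> (a \<mapsto> f(pi(a) \<otimes> 1)).\<close>

definition bend_to_trop :: "('a \<Rightarrow> 'r) \<Rightarrow> (('r \<Rightarrow> real) \<Rightarrow> real) \<Rightarrow> ('a \<Rightarrow> real)" where
  "bend_to_trop phi f = (\<lambda>a. f (tmono 1 (phi a)))"

text \<open>Precomposition with Bend_v(beta), beta : B \<rightarrow> R the inclusion; on formal sums
  Bend_v(beta) is the inclusion T[B^bullet]^+ \<subseteq> T[R]^+.\<close>

definition bend_beta_pullback :: "'r set \<Rightarrow> (('r \<Rightarrow> real) \<Rightarrow> real) \<Rightarrow> (('r \<Rightarrow> real) \<Rightarrow> real)" where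
  "bend_beta_pullback Bb g = restrict g (fsum Bb)"

end

theory Submission
  imports Defs
begin

text \<open>A point \<open>f\<close> of \<open>Bend\<^sub>v(C)\<close> is determined by the weights \<open>f(c \<otimes> 1)\<close>,
  \<open>c \<in> C\<^sup>\<bullet>\<close>, and the relations defining \<open>Bend\<^sub>v(C)\<close> say precisely that these form a
  multiplicative, \<open>v\<close>-homogeneous weight satisfying \<open>f(a) \<le> max f(b\<^sub>j)\<close> whenever
  \<open>a = \<Sum> b\<^sub>j\<close>. For \<open>C = R\<close> such a weight is a point of \<open>Y\<^sup>a\<^sup>n\<close>, which gives (1).
  For \<open>C = B\<close> it is only a weight \<open>H\<close> on \<open>B\<^sup>\<bullet>\<close>, and the key step is to extend it to a
  multiplicative seminorm on \<open>R\<close>: the infimum of \<open>max H(b\<^sub>i)\<close> over all representations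
  \<open>r = \<Sum> b\<^sub>i\<close>, renormalized to be \<open>H\<close>-homogeneous, is an \<open>H\<close>-homogeneous
  submultiplicative ultrametric seminorm; by Zorn's lemma there is a minimal one, which equals
  its spectral seminorm and is therefore power-multiplicative, and then multiplicative.
  Hence every point of \<open>Bend\<^sub>v(B)\<close> is the restriction of a point of \<open>Y\<^sup>a\<^sup>n\<close>; this
  identifies it with a point of \<open>Trop\<^sup>K\<^sup>P\<close> and gives (2) and (3). Continuity is
  automatic since each coordinate of each map is a maximum of finitely many multiples of
  coordinates.\<close>

lemma Max_insert0_ge: "finite S \<Longrightarrow> s \<in> S \<Longrightarrow> s \<le> Max (insert (0::real) S)"
  by simp

lemma Max_insert0_nonneg: "finite S \<Longrightarrow> 0 \<le> Max (insert (0::real) S)"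
  by simp

lemma Max_insert0_le:
  "finite S \<Longrightarrow> (\<And>s. s \<in> S \<Longrightarrow> s \<le> B) \<Longrightarrow> 0 \<le> B \<Longrightarrow> Max (insert (0::real) S) \<le> B"
  by simp

lemma Max_insert0_cases: "finite S \<Longrightarrow> Max (insert (0::real) S) = 0 \<or> Max (insert (0::real) S) \<in> S"
  using Max_in[of "insert 0 S"] by auto

section \<open>Formal tropical sums\<close>

lemma fsumD:
  assumes "x \<in> fsum M"
  shows "\<And>m. x m \<ge> 0" "finite {m. x m \<noteq> 0}" "\<And>m. x m \<noteq> 0 \<Longrightarrow> m \<in> M"
  using assms by (auto simp: fsum_def)

lemma fsum_mono: "M \<subseteq> N \<Longrightarrow> fsum M \<subseteq> fsum N"
  unfolding fsum_def by auto

lemma tmono_in_fsum: "t \<ge> 0 \<Longrightarrow> c \<in> M \<Longrightarrow> tmono t c \<in> fsum M"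
  unfolding fsum_def tmono_def by auto

lemma tzero_in_fsum: "tzero \<in> fsum M"
  unfolding fsum_def tzero_def by auto

lemma tadd_in_fsum:
  assumes x: "x \<in> fsum M" and y: "y \<in> fsum M"
  shows "tadd x y \<in> fsum M"
proof -
  have "{m. tadd x y m \<noteq> 0} \<subseteq> {m. x m \<noteq> 0} \<union> {m. y m \<noteq> 0}"
    unfolding tadd_def by auto
  then show ?thesis using x y unfolding fsum_def tadd_def
    by (auto intro: finite_subset simp: le_max_iff_disj)
qed

lemma tsum_list_Nil [simp]: "tsum_list [] = tzero"
  by (simp add: tsum_list_def)

lemma tsum_list_Cons [simp]: "tsum_list (x # xs) = tadd x (tsum_list xs)"
  by (simp add: tsum_list_def)

lemma tsum_list_in_fsum: "set xs \<subseteq> fsum M \<Longrightarrow> tsum_list xs \<in> fsum M"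
  by (induction xs) (auto simp: tzero_in_fsum tadd_in_fsum)

lemma tsum_list_tmono_in_fsum: "t \<ge> 0 \<Longrightarrow> set bs \<subseteq> M \<Longrightarrow> tsum_list (map (tmono t) bs) \<in> fsum M"
  by (auto intro!: tsum_list_in_fsum tmono_in_fsum)

lemma tadd_tmono_update: "x \<in> fsum M \<Longrightarrow> tadd (tmono (x c) c) (x(c := 0)) = x"
  using fsumD(1) by (fastforce simp: tadd_def tmono_def)

lemma fun_upd_zero_in_fsum: "x \<in> fsum M \<Longrightarrow> x(c := 0) \<in> fsum M"
  unfolding fsum_def by (auto elim: finite_subset[rotated])

lemma finite_tmul_set:
  assumes "x \<in> fsum M" "y \<in> fsum M"
  shows "finite {x m * y n | m n. m * n = p \<and> x m \<noteq> 0 \<and> y n \<noteq> 0}"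
proof -
  have "{x m * y n | m n. m * n = p \<and> x m \<noteq> 0 \<and> y n \<noteq> 0}
      \<subseteq> (\<lambda>(m,n). x m * y n) ` ({m. x m \<noteq> 0} \<times> {n. y n \<noteq> 0})"
    by auto
  then show ?thesis using fsumD(2)[OF assms(1)] fsumD(2)[OF assms(2)]
    by (meson finite_SigmaI finite_imageI finite_subset)
qed

lemma tmul_nonneg: "x \<in> fsum M \<Longrightarrow> y \<in> fsum M \<Longrightarrow> 0 \<le> tmul x y p"
  unfolding tmul_def using Max_insert0_nonneg finite_tmul_set by blast

lemma tmul_ge:
  assumes "x \<in> fsum M" "y \<in> fsum M"
  shows "x m * y n \<le> tmul x y (m * n)"
proof (cases "x m = 0 \<or> y n = 0")
  case True
  then show ?thesis using tmul_nonneg[OF assms] by auto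
next
  case False
  then show ?thesis unfolding tmul_def by (intro Max_insert0_ge[OF finite_tmul_set[OF assms]]) auto
qed

lemma tmul_cases:
  "x \<in> fsum M \<Longrightarrow> y \<in> fsum M \<Longrightarrow>
     tmul x y p = 0 \<or> (\<exists>m n. m * n = p \<and> x m \<noteq> 0 \<and> y n \<noteq> 0 \<and> tmul x y p = x m * y n)"
  unfolding tmul_def using Max_insert0_cases[OF finite_tmul_set] by blast

lemma tmul_support:
  assumes "x \<in> fsum M" "y \<in> fsum M"
  shows "{p. tmul x y p \<noteq> 0} \<subseteq> (\<lambda>(m,n). m * n) ` ({m. x m \<noteq> 0} \<times> {n. y n \<noteq> 0})"
  using tmul_cases[OF assms] by fastforce

definition mult_closed :: "'c::times set \<Rightarrow> bool" where
  "mult_closed M \<longleftrightarrow> (\<forall>a\<in>M. \<forall>b\<in>M. a * b \<in> M)"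

lemma tmul_in_fsum:
  assumes M: "mult_closed M" and x: "x \<in> fsum M" and y: "y \<in> fsum M"
  shows "tmul x y \<in> fsum M"
proof -
  have "finite {p. tmul x y p \<noteq> 0}"
    using tmul_support[OF x y] fsumD(2)[OF x] fsumD(2)[OF y] by (auto intro: finite_subset)
  moreover have "{p. tmul x y p \<noteq> 0} \<subseteq> M"
    using tmul_support[OF x y] fsumD(3)[OF x] fsumD(3)[OF y] M
    unfolding mult_closed_def by fastforce
  ultimately show ?thesis using tmul_nonneg[OF x y] unfolding fsum_def by auto
qed

lemma tmul_tmono:
  assumes "s \<ge> 0" "t \<ge> 0"
  shows "tmul (tmono s a) (tmono t b) = tmono (s * t) (a * b)"
proof
  fix p
  have "{tmono s a m * tmono t b n | m n. m * n = p \<and> tmono s a m \<noteq> 0 \<and> tmono t b n \<noteq> 0}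
      = (if p = a * b \<and> s \<noteq> 0 \<and> t \<noteq> 0 then {s * t} else {})"
    unfolding tmono_def by auto
  then show "tmul (tmono s a) (tmono t b) p = tmono (s * t) (a * b) p"
    unfolding tmul_def using assms by (auto simp: tmono_def)
qed

definition teval :: "('c \<Rightarrow> real) \<Rightarrow> ('c \<Rightarrow> real) \<Rightarrow> real" where
  "teval w x = Max (insert 0 {x m * w m | m. x m \<noteq> 0})"

abbreviation max_weight :: "('c \<Rightarrow> real) \<Rightarrow> 'c list \<Rightarrow> real" where
  "max_weight w bs \<equiv> foldr (\<lambda>b acc. max (w b) acc) bs 0"

lemma teval_set_eq: "{x m * w m | m. x m \<noteq> 0} = (\<lambda>m. x m * w m) ` {m. x m \<noteq> 0}"
  by auto

lemma finite_teval_set: "x \<in> fsum M \<Longrightarrow> finite {x m * w m | m. x m \<noteq> 0}"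
  unfolding teval_set_eq using fsumD(2) by blast

lemma teval_nonneg: "x \<in> fsum M \<Longrightarrow> 0 \<le> teval w x"
  unfolding teval_def using finite_teval_set Max_insert0_nonneg by blast

lemma teval_ge: "x \<in> fsum M \<Longrightarrow> x m * w m \<le> teval w x"
  unfolding teval_def
  by (cases "x m = 0") (auto intro: Max_insert0_ge Max_insert0_nonneg finite_teval_set)

lemma teval_le:
  "x \<in> fsum M \<Longrightarrow> 0 \<le> B \<Longrightarrow> (\<And>m. x m \<noteq> 0 \<Longrightarrow> x m * w m \<le> B) \<Longrightarrow> teval w x \<le> B"
  unfolding teval_def by (rule Max_insert0_le[OF finite_teval_set]) auto

lemma teval_cases: "x \<in> fsum M \<Longrightarrow> teval w x = 0 \<or> (\<exists>m. x m \<noteq> 0 \<and> teval w x = x m * w m)"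
  unfolding teval_def using Max_insert0_cases[OF finite_teval_set] by blast

lemma teval_cong: "x \<in> fsum M \<Longrightarrow> (\<And>m. m \<in> M \<Longrightarrow> w1 m = w2 m) \<Longrightarrow> teval w1 x = teval w2 x"
  unfolding teval_def using fsumD(3) by (metis (no_types, lifting))

lemma teval_tzero [simp]: "teval w tzero = 0"
  unfolding teval_def tzero_def by auto

lemma teval_tmono: "t \<ge> 0 \<Longrightarrow> w c \<ge> 0 \<Longrightarrow> teval w (tmono t c) = t * w c"
proof -
  assume "t \<ge> 0" "w c \<ge> 0"
  moreover have "{tmono t c m * w m | m. tmono t c m \<noteq> 0} = (if t = 0 then {} else {t * w c})"
    unfolding tmono_def by auto
  ultimately show ?thesis unfolding teval_def by auto
qed

lemma teval_mono:
  assumes x: "x \<in> fsum M" and y: "y \<in> fsum M" and w: "\<And>m. m \<in> M \<Longrightarrow> w m \<ge> 0"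
    and le: "\<And>m. x m \<le> y m"
  shows "teval w x \<le> teval w y"
proof (rule teval_le[OF x teval_nonneg[OF y]])
  fix m assume "x m \<noteq> 0"
  then have "x m * w m \<le> y m * w m" using le w fsumD(3)[OF x] by (simp add: mult_right_mono)
  also have "\<dots> \<le> teval w y" by (rule teval_ge[OF y])
  finally show "x m * w m \<le> teval w y" .
qed

lemma teval_tadd:
  assumes x: "x \<in> fsum M" and y: "y \<in> fsum M" and w: "\<And>m. m \<in> M \<Longrightarrow> w m \<ge> 0"
  shows "teval w (tadd x y) = max (teval w x) (teval w y)"
proof (rule antisym)
  have xy: "tadd x y \<in> fsum M" using tadd_in_fsum[OF x y] .
  show "teval w (tadd x y) \<le> max (teval w x) (teval w y)"
  proof (rule teval_le[OF xy])
    show "0 \<le> max (teval w x) (teval w y)" using teval_nonneg[OF x, of w] by auto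
    fix m assume "tadd x y m \<noteq> 0"
    then have "w m \<ge> 0" using w fsumD(3)[OF xy] by blast
    then have "tadd x y m * w m = max (x m * w m) (y m * w m)"
      unfolding tadd_def by (simp add: max_mult_distrib_right)
    also have "\<dots> \<le> max (teval w x) (teval w y)" using teval_ge[OF x, of m w] teval_ge[OF y, of m w] by auto
    finally show "tadd x y m * w m \<le> max (teval w x) (teval w y)" .
  qed
  show "max (teval w x) (teval w y) \<le> teval w (tadd x y)"
    using teval_mono[OF x xy w] teval_mono[OF y xy w] by (simp add: tadd_def)
qed

lemma teval_tmul:
  assumes M: "mult_closed M" and x: "x \<in> fsum M" and y: "y \<in> fsum M"
    and w: "\<And>m. m \<in> M \<Longrightarrow> w m \<ge> 0"
    and w_mult: "\<And>m n. m \<in> M \<Longrightarrow> n \<in> M \<Longrightarrow> w (m * n) = w m * w n"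
  shows "teval w (tmul x y) = teval w x * teval w y"
proof (rule antisym)
  have xy: "tmul x y \<in> fsum M" using tmul_in_fsum[OF M x y] .
  show "teval w (tmul x y) \<le> teval w x * teval w y"
  proof (rule teval_le[OF xy])
    show "0 \<le> teval w x * teval w y" using teval_nonneg[OF x] teval_nonneg[OF y] by auto
    fix p assume "tmul x y p \<noteq> 0"
    then obtain m n where mn: "m * n = p" "x m \<noteq> 0" "y n \<noteq> 0" "tmul x y p = x m * y n"
      using tmul_cases[OF x y, of p] by blast
    have mn_M: "m \<in> M" "n \<in> M" using fsumD(3)[OF x mn(2)] fsumD(3)[OF y mn(3)] by auto
    have "tmul x y p * w p = (x m * w m) * (y n * w n)"
      using mn w_mult[OF mn_M] by (simp add: algebra_simps)
    also have "\<dots> \<le> teval w x * teval w y"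
      using teval_ge[OF x, of m w] teval_ge[OF y, of n w] fsumD(1)[OF x, of m] w[OF mn_M(1)]
        w[OF mn_M(2)] fsumD(1)[OF y, of n] teval_nonneg[OF x]
      by (intro mult_mono) auto
    finally show "tmul x y p * w p \<le> teval w x * teval w y" .
  qed
  show "teval w x * teval w y \<le> teval w (tmul x y)"
  proof (cases "teval w x = 0 \<or> teval w y = 0")
    case True then show ?thesis using teval_nonneg[OF xy] by auto
  next
    case False
    then obtain m n where m: "x m \<noteq> 0" "teval w x = x m * w m"
      and n: "y n \<noteq> 0" "teval w y = y n * w n"
      using teval_cases[OF x] teval_cases[OF y] by metis
    have mn_M: "m \<in> M" "n \<in> M" using fsumD(3)[OF x m(1)] fsumD(3)[OF y n(1)] by auto
    have "teval w x * teval w y = (x m * y n) * w (m * n)"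
      using m n w_mult[OF mn_M] by (simp add: algebra_simps)
    also have "\<dots> \<le> tmul x y (m * n) * w (m * n)"
      using tmul_ge[OF x y] w[OF mn_M(1)] w[OF mn_M(2)] w_mult[OF mn_M] by (intro mult_right_mono) auto
    also have "\<dots> \<le> teval w (tmul x y)" by (rule teval_ge[OF xy])
    finally show ?thesis .
  qed
qed

lemma teval_tsum_list:
  assumes "t \<ge> 0" "set bs \<subseteq> M" "\<And>m. m \<in> M \<Longrightarrow> w m \<ge> 0"
  shows "teval w (tsum_list (map (tmono t) bs)) = t * max_weight w bs"
  using assms(2)
proof (induction bs)
  case Nil then show ?case by simp
next
  case (Cons b bs)
  have "teval w (tsum_list (map (tmono t) (b # bs)))
      = max (teval w (tmono t b)) (teval w (tsum_list (map (tmono t) bs)))"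
    using Cons.prems assms
    by (simp add: teval_tadd[OF tmono_in_fsum tsum_list_tmono_in_fsum, where M = M])
  also have "\<dots> = t * max_weight w (b # bs)"
    using Cons assms by (simp add: teval_tmono max_mult_distrib_left)
  finally show ?case .
qed

lemma max_weight_nonneg: "0 \<le> max_weight w bs"
  by (induction bs) auto

lemma max_weight_append: "max_weight w (bs @ cs) = max (max_weight w bs) (max_weight w cs)"
  by (induction bs) (auto simp: max_weight_nonneg max.assoc max_absorb2)

lemma max_weight_ge: "b \<in> set bs \<Longrightarrow> w b \<le> max_weight w bs"
  by (induction bs) auto

lemma max_weight_le: "(\<And>b. b \<in> set bs \<Longrightarrow> w b \<le> B) \<Longrightarrow> 0 \<le> B \<Longrightarrow> max_weight w bs \<le> B"
  by (induction bs) auto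

section \<open>Points of the bend\<close>

definition scalar_monoid :: "('k::field \<Rightarrow> 'r::comm_ring_1) \<Rightarrow> 'r set \<Rightarrow> bool" where
  "scalar_monoid emb Cb \<longleftrightarrow> 1 \<in> Cb \<and> mult_closed Cb \<and> (\<forall>l. \<forall>c\<in>Cb. emb l * c \<in> Cb)"

lemma scalar_monoid_UNIV: "scalar_monoid emb UNIV"
  unfolding scalar_monoid_def mult_closed_def by auto

lemma nonarch_abs_nonneg: "nonarch_abs v \<Longrightarrow> 0 \<le> v a"
  unfolding nonarch_abs_def by auto

lemma bend_cong_in_fsum:
  assumes v: "nonarch_abs v" and C: "scalar_monoid emb Cb" and xy: "(x, y) \<in> bend_cong v emb Cb"
  shows "x \<in> fsum Cb \<and> y \<in> fsum Cb"
  using xy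
proof (induction rule: bend_cong.induct)
  case (gen_scalar c t l)
  then show ?case using C nonarch_abs_nonneg[OF v, of l] unfolding scalar_monoid_def
    by (auto intro!: tmono_in_fsum)
next
  case (gen_order a bs t)
  then show ?case by (auto intro: tadd_in_fsum tmono_in_fsum tsum_list_tmono_in_fsum)
next
  case (mul x y x' y')
  then show ?case using C unfolding scalar_monoid_def by (auto intro: tmul_in_fsum)
qed (auto intro: tadd_in_fsum)

lemma berkD:
  assumes "w \<in> berk v emb"
  shows "\<And>r. 0 \<le> w r" "w 0 = 0" "w 1 = 1" "\<And>a b. w (a * b) = w a * w b"
    "\<And>a b. w (a + b) \<le> max (w a) (w b)" "\<And>l. w (emb l) = v l"
  using assms unfolding berk_def by auto

lemma berk_sum_list_le: "w \<in> berk v emb \<Longrightarrow> w (sum_list bs) \<le> max_weight w bs"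
  by (induction bs) (auto simp: berkD intro: order_trans[OF berkD(5)])

lemma teval_respects_bend_cong:
  assumes v: "nonarch_abs v" and C: "scalar_monoid emb Cb" and w: "w \<in> berk v emb"
    and xy: "(x, y) \<in> bend_cong v emb Cb"
  shows "teval w x = teval w y"
  using xy
proof (induction rule: bend_cong.induct)
  case (gen_scalar c t l)
  then show ?case using nonarch_abs_nonneg[OF v, of l]
    by (simp add: teval_tmono berkD[OF w])
next
  case (gen_order a bs t)
  have "teval w (tadd (tmono t a) (tsum_list (map (tmono t) bs))) = max (t * w a) (t * max_weight w bs)"
    using gen_order berkD(1)[OF w]
    by (simp add: teval_tadd[OF tmono_in_fsum tsum_list_tmono_in_fsum, where M = Cb]
        teval_tmono teval_tsum_list)
  also have "\<dots> = t * max_weight w bs"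
    using gen_order berk_sum_list_le[OF w, of bs] by (simp add: mult_left_mono)
  finally show ?case
    using gen_order berkD(1)[OF w] by (simp add: teval_tsum_list)
next
  case (add x y x' y')
  then show ?case using bend_cong_in_fsum[OF v C] berkD(1)[OF w] by (metis teval_tadd)
next
  case (mul x y x' y')
  then show ?case using bend_cong_in_fsum[OF v C] berkD(1,4)[OF w] C
    unfolding scalar_monoid_def by (metis teval_tmul)
qed simp_all

lemma teval_in_bend_hom:
  assumes v: "nonarch_abs v" and C: "scalar_monoid emb Cb" and w: "w \<in> berk v emb"
  shows "restrict (teval w) (fsum Cb) \<in> bend_hom v emb Cb"
proof -
  have "1 \<in> Cb" and M: "mult_closed Cb" using C unfolding scalar_monoid_def by auto
  then show ?thesis
    using teval_respects_bend_cong[OF v C w] berkD[OF w]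
    unfolding bend_hom_def
    by (auto simp: tzero_in_fsum tmono_in_fsum teval_nonneg teval_tmono tadd_in_fsum teval_tadd
        tmul_in_fsum[OF M] teval_tmul[OF M] bend_cong_in_fsum[OF v C])
qed

lemma bend_homD:
  assumes "f \<in> bend_hom v emb Cb"
  shows "f \<in> extensional (fsum Cb)" "\<And>x. x \<in> fsum Cb \<Longrightarrow> f x \<ge> 0" "f tzero = 0"
    "f (tmono 1 1) = 1"
    "\<And>x y. x \<in> fsum Cb \<Longrightarrow> y \<in> fsum Cb \<Longrightarrow> f (tadd x y) = max (f x) (f y)"
    "\<And>x y. x \<in> fsum Cb \<Longrightarrow> y \<in> fsum Cb \<Longrightarrow> f (tmul x y) = f x * f y"
    "\<And>t. t \<ge> 0 \<Longrightarrow> f (tmono t 1) = t"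
    "\<And>x y. (x, y) \<in> bend_cong v emb Cb \<Longrightarrow> f x = f y"
  using assms unfolding bend_hom_def by auto

definition bend_weight :: "(('r \<Rightarrow> real) \<Rightarrow> real) \<Rightarrow> 'r \<Rightarrow> real" where
  "bend_weight f c = f (tmono 1 c)"

locale bend_point =
  fixes v :: "'k::field \<Rightarrow> real" and emb :: "'k \<Rightarrow> 'r::comm_ring_1" and Cb f
  assumes nonarch: "nonarch_abs v" and scalar_monoid: "scalar_monoid emb Cb"
    and bend_hom: "f \<in> bend_hom v emb Cb"
begin

lemmas bendD = bend_homD[OF bend_hom]

lemma one_in: "1 \<in> Cb"
  using scalar_monoid unfolding scalar_monoid_def by auto

lemma f_tmono: "t \<ge> 0 \<Longrightarrow> c \<in> Cb \<Longrightarrow> f (tmono t c) = t * bend_weight f c"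
proof -
  assume t: "t \<ge> 0" and c: "c \<in> Cb"
  have "f (tmono t c) = f (tmul (tmono t 1) (tmono 1 c))" by (simp add: tmul_tmono t)
  also have "\<dots> = t * bend_weight f c"
    using bendD(6)[of "tmono t 1" "tmono 1 c"] bendD(7)[OF t] t c one_in
    by (simp add: tmono_in_fsum bend_weight_def)
  finally show ?thesis .
qed

lemma bend_weight_nonneg: "c \<in> Cb \<Longrightarrow> 0 \<le> bend_weight f c"
  unfolding bend_weight_def by (rule bendD(2), rule tmono_in_fsum) simp_all

lemma bend_weight_one: "bend_weight f 1 = 1"
  unfolding bend_weight_def by (rule bendD(4))

lemma bend_weight_mult:
  "m \<in> Cb \<Longrightarrow> n \<in> Cb \<Longrightarrow> bend_weight f (m * n) = bend_weight f m * bend_weight f n"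
  using bendD(6)[of "tmono 1 m" "tmono 1 n"] by (simp add: bend_weight_def tmul_tmono tmono_in_fsum)

lemma bend_weight_scalar: "c \<in> Cb \<Longrightarrow> bend_weight f (emb l * c) = v l * bend_weight f c"
proof -
  assume c: "c \<in> Cb"
  have "(tmono (v l * 1) c, tmono 1 (emb l * c)) \<in> bend_cong v emb Cb"
    by (rule bend_cong.gen_scalar[OF c]) simp
  then have "f (tmono (v l) c) = f (tmono 1 (emb l * c))" using bendD(8) by auto
  then show ?thesis using f_tmono[OF nonarch_abs_nonneg[OF nonarch] c] by (simp add: bend_weight_def)
qed

lemma f_tsum_list:
  "set bs \<subseteq> Cb \<Longrightarrow> f (tsum_list (map (tmono 1) bs)) = max_weight (bend_weight f) bs"
  by (induction bs)
     (auto simp: bendD(3) bendD(5)[OF tmono_in_fsum tsum_list_tmono_in_fsum] bend_weight_def)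

lemma bend_weight_sum_list_le:
  assumes a: "a \<in> Cb" "set bs \<subseteq> Cb" "a = sum_list bs"
  shows "bend_weight f a \<le> max_weight (bend_weight f) bs"
proof -
  have "(tadd (tmono 1 a) (tsum_list (map (tmono 1) bs)), tsum_list (map (tmono 1) bs))
      \<in> bend_cong v emb Cb"
    by (rule bend_cong.gen_order[OF a]) simp
  then have "f (tadd (tmono 1 a) (tsum_list (map (tmono 1) bs))) = f (tsum_list (map (tmono 1) bs))"
    using bendD(8) by auto
  then show ?thesis
    using a bendD(5)[OF tmono_in_fsum tsum_list_tmono_in_fsum] f_tsum_list[OF a(2)]
    by (simp add: bend_weight_def)
qed

lemma f_eq_teval_support:
  assumes "finite F"
  shows "x \<in> fsum Cb \<Longrightarrow> {m. x m \<noteq> 0} = F \<Longrightarrow> f x = teval (bend_weight f) x"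
  using assms
proof (induction F arbitrary: x rule: finite_induct)
  case empty
  then have "x = tzero" unfolding tzero_def by auto
  then show ?case using bendD(3) by simp
next
  case (insert c F)
  let ?x' = "x(c := 0)"
  have x': "?x' \<in> fsum Cb" using fun_upd_zero_in_fsum[OF insert.prems(1)] .
  have c: "c \<in> Cb" and xc: "x c \<ge> 0" using insert.prems fsumD[OF insert.prems(1)] by auto
  have t: "tmono (x c) c \<in> fsum Cb" using xc c by (rule tmono_in_fsum)
  have "{m. ?x' m \<noteq> 0} = F" using insert.prems(2) insert.hyps(2) by auto
  then have "f ?x' = teval (bend_weight f) ?x'" using insert.IH x' by blast
  then have "f (tadd (tmono (x c) c) ?x') = teval (bend_weight f) (tadd (tmono (x c) c) ?x')"
    using bendD(5)[OF t x'] teval_tadd[OF t x' bend_weight_nonneg] f_tmono[OF xc c]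
      teval_tmono[of "x c" "bend_weight f", OF xc bend_weight_nonneg[OF c]]
    by simp
  then show ?case unfolding tadd_tmono_update[OF insert.prems(1)] .
qed

lemma bend_hom_eq_teval: "f = restrict (teval (bend_weight f)) (fsum Cb)"
proof
  fix x show "f x = restrict (teval (bend_weight f)) (fsum Cb) x"
    using f_eq_teval_support[OF fsumD(2)] bendD(1)
    by (cases "x \<in> fsum Cb") (auto simp: extensional_def)
qed

end

lemma bdd_below_nonneg: "(\<And>x. x \<in> X \<Longrightarrow> (0::real) \<le> x) \<Longrightarrow> bdd_below X"
  by (rule bdd_belowI[of _ 0]) auto

lemma cInf_nonneg: "X \<noteq> {} \<Longrightarrow> (\<And>x. x \<in> X \<Longrightarrow> (0::real) \<le> x) \<Longrightarrow> 0 \<le> Inf X"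
  by (intro cInf_greatest) auto

lemma le_max_cInf:
  fixes X Y :: "real set"
  assumes "X \<noteq> {}" "Y \<noteq> {}" "bdd_below X" "bdd_below Y"
    and "\<And>x y. x \<in> X \<Longrightarrow> y \<in> Y \<Longrightarrow> c \<le> max x y"
  shows "c \<le> max (Inf X) (Inf Y)"
proof (rule ccontr)
  assume "\<not> ?thesis" then have "Inf X < c" "Inf Y < c" by auto
  then obtain x y where "x \<in> X" "x < c" "y \<in> Y" "y < c" using cInf_lessD assms(1,2) by metis
  then show False using assms(5)[of x y] by auto
qed

lemma le_cInf_mult:
  fixes X Y :: "real set"
  assumes X: "X \<noteq> {}" "\<And>x. x \<in> X \<Longrightarrow> 0 \<le> x" and Y: "Y \<noteq> {}" "\<And>y. y \<in> Y \<Longrightarrow> 0 \<le> y"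
    and c: "\<And>x y. x \<in> X \<Longrightarrow> y \<in> Y \<Longrightarrow> c \<le> x * y"
  shows "c \<le> Inf X * Inf Y"
proof (rule ccontr)
  define a where "a = Inf X"
  define b where "b = Inf Y"
  have a0: "0 \<le> a" and b0: "0 \<le> b" unfolding a_def b_def using X Y by (auto intro: cInf_nonneg)
  assume "\<not> ?thesis" then have lt: "a * b < c" unfolding a_def b_def by simp
  \<comment> \<open>choose \<open>e\<close> so small that \<open>(a + e) * (b + e) < c\<close>\<close>
  define e where "e = min 1 ((c - a * b) / (a + b + 2))"
  have e0: "0 < e" and e1: "e \<le> 1" unfolding e_def using lt a0 b0 by auto
  have e2: "e * (a + b + 2) \<le> c - a * b"
  proof -
    have "e \<le> (c - a * b) / (a + b + 2)" unfolding e_def by simp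
    then show ?thesis using a0 b0 by (simp add: pos_le_divide_eq)
  qed
  have "(a + e) * (b + e) = a * b + e * (a + b + e)" by (simp add: algebra_simps)
  also have "e * (a + b + e) < e * (a + b + 2)" using e0 e1 by (intro mult_strict_left_mono) auto
  finally have ab: "(a + e) * (b + e) < c" using e2 by linarith
  obtain x where x: "x \<in> X" "x < a + e" using cInf_lessD[OF X(1), of "a + e"] e0 unfolding a_def by auto
  obtain y where y: "y \<in> Y" "y < b + e" using cInf_lessD[OF Y(1), of "b + e"] e0 unfolding b_def by auto
  have "x * y \<le> (a + e) * (b + e)" using x y X(2)[OF x(1)] Y(2)[OF y(1)] by (intro mult_mono) auto
  then show False using c[OF x(1) y(1)] ab by linarith
qed

lemma le_mult_cInf:
  fixes X :: "real set"
  assumes "X \<noteq> {}" "bdd_below X" "0 \<le> k" "\<And>x. x \<in> X \<Longrightarrow> c \<le> k * x"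
  shows "c \<le> k * Inf X"
proof (cases "k = 0")
  case True
  then obtain x where "x \<in> X" using assms(1) by auto
  then show ?thesis using assms(4) True by fastforce
next
  case False
  then have k: "0 < k" using assms(3) by auto
  have "c / k \<le> Inf X"
    using assms(1) by (rule cInf_greatest) (use assms(4) k in \<open>simp add: divide_le_eq mult.commute\<close>)
  then show ?thesis using k by (simp add: divide_le_eq mult.commute)
qed

lemma cInf_mult_left:
  fixes g :: "'i \<Rightarrow> real"
  assumes "I \<noteq> {}" "\<And>i. i \<in> I \<Longrightarrow> 0 \<le> g i" "0 \<le> k"
  shows "Inf ((\<lambda>i. k * g i) ` I) = k * Inf (g ` I)"
proof (rule antisym)
  have bdd: "bdd_below ((\<lambda>i. k * g i) ` I)" "bdd_below (g ` I)"
    using assms by (auto intro: bdd_below_nonneg)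
  show "Inf ((\<lambda>i. k * g i) ` I) \<le> k * Inf (g ` I)"
    using assms bdd by (intro le_mult_cInf) (auto intro: cInf_lower)
  show "k * Inf (g ` I) \<le> Inf ((\<lambda>i. k * g i) ` I)"
    using assms(1) by (intro cInf_greatest) (auto intro!: mult_left_mono cInf_lower bdd assms(3))
qed

lemma real_root_mult_power: "0 < n \<Longrightarrow> 0 < m \<Longrightarrow> 0 \<le> x \<Longrightarrow> root (n * m) (x ^ m) = root n x"
  by (simp add: real_root_mult_exp real_root_power_cancel)

section \<open>Extending a multiplicative weight to a multiplicative seminorm\<close>

locale weighted_monoid =
  fixes B :: "'r::comm_ring_1 set" and H :: "'r \<Rightarrow> real"
  assumes one_in_B: "1 \<in> B" and zero_in_B: "0 \<in> B"
    and mult_in_B: "\<And>a b. a \<in> B \<Longrightarrow> b \<in> B \<Longrightarrow> a * b \<in> B"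
    and H_mult: "\<And>a b. a \<in> B \<Longrightarrow> b \<in> B \<Longrightarrow> H (a * b) = H a * H b"
    and H_nonneg: "\<And>b. b \<in> B \<Longrightarrow> 0 \<le> H b" and H_zero: "H 0 = 0" and H_one: "H 1 = 1"
begin

definition B_seminorms :: "('r \<Rightarrow> real) set" where
  "B_seminorms = {\<rho>. (\<forall>x. 0 \<le> \<rho> x) \<and> \<rho> 1 = 1 \<and> (\<forall>a b. \<rho> (a + b) \<le> max (\<rho> a) (\<rho> b)) \<and>
     (\<forall>a b. \<rho> (a * b) \<le> \<rho> a * \<rho> b) \<and> (\<forall>b\<in>B. \<forall>x. \<rho> (b * x) = H b * \<rho> x)}"

lemma B_seminormsI:
  assumes "\<And>x. 0 \<le> \<rho> x" "\<rho> 1 = 1" "\<And>a b. \<rho> (a + b) \<le> max (\<rho> a) (\<rho> b)"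
    "\<And>a b. \<rho> (a * b) \<le> \<rho> a * \<rho> b" "\<And>b x. b \<in> B \<Longrightarrow> \<rho> (b * x) = H b * \<rho> x"
  shows "\<rho> \<in> B_seminorms"
  using assms unfolding B_seminorms_def by auto

lemma B_seminormsD:
  assumes "\<rho> \<in> B_seminorms"
  shows "\<And>x. 0 \<le> \<rho> x" "\<rho> 1 = 1" "\<And>a b. \<rho> (a + b) \<le> max (\<rho> a) (\<rho> b)"
    "\<And>a b. \<rho> (a * b) \<le> \<rho> a * \<rho> b" "\<And>b x. b \<in> B \<Longrightarrow> \<rho> (b * x) = H b * \<rho> x"
  using assms unfolding B_seminorms_def by auto

lemma B_seminorm_zero: "\<rho> \<in> B_seminorms \<Longrightarrow> \<rho> 0 = 0"
  using B_seminormsD(5)[of \<rho> 0 0] zero_in_B H_zero by simp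

lemma power_in_B: "b \<in> B \<Longrightarrow> b ^ n \<in> B \<and> H (b ^ n) = H b ^ n"
  by (induction n) (auto simp: one_in_B mult_in_B H_mult H_one)

text \<open>The spectral seminorm \<open>lim (\<rho>(g\<^sup>n))\<^sup>1\<^sup>/\<^sup>n\<close>, written as an infimum.\<close>

definition spectral :: "('r \<Rightarrow> real) \<Rightarrow> 'r \<Rightarrow> real" where
  "spectral \<rho> g = Inf ((\<lambda>n. root n (\<rho> (g ^ n))) ` {1..})"

context
  fixes \<rho> assumes \<rho>: "\<rho> \<in> B_seminorms"
begin

lemma seminorm_power_le: "\<rho> (g ^ n) \<le> \<rho> g ^ n"
proof (induction n)
  case (Suc n)
  have "\<rho> (g ^ Suc n) \<le> \<rho> g * \<rho> (g ^ n)" using B_seminormsD(4)[OF \<rho>] by simp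
  also have "\<dots> \<le> \<rho> g * \<rho> g ^ n" using Suc B_seminormsD(1)[OF \<rho>] by (intro mult_left_mono) auto
  finally show ?case by simp
qed (simp add: B_seminormsD(2)[OF \<rho>])

lemma seminorm_power_add: "\<rho> (g ^ (m + n)) \<le> \<rho> (g ^ m) * \<rho> (g ^ n)"
  using B_seminormsD(4)[OF \<rho>] by (simp add: power_add)

lemma seminorm_power_mult: "\<rho> (g ^ (m * n)) \<le> \<rho> (g ^ m) ^ n"
  using seminorm_power_le[of "g ^ m" n] by (simp add: power_mult)

lemma seminorm_sum_le:
  "finite K \<Longrightarrow> (\<And>k. k \<in> K \<Longrightarrow> \<rho> (x k) \<le> C) \<Longrightarrow> 0 \<le> C \<Longrightarrow> \<rho> (sum x K) \<le> C"
proof (induction K rule: finite_induct)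
  case (insert k K)
  then show ?case using B_seminormsD(3)[OF \<rho>, of "x k" "sum x K"] by fastforce
qed (simp add: B_seminorm_zero[OF \<rho>])

lemma seminorm_of_nat_mult_le: "\<rho> (of_nat m * x) \<le> \<rho> x"
proof (induction m)
  case (Suc m)
  have "\<rho> (of_nat (Suc m) * x) = \<rho> (x + of_nat m * x)" by (simp add: algebra_simps)
  also have "\<dots> \<le> max (\<rho> x) (\<rho> (of_nat m * x))" by (rule B_seminormsD(3)[OF \<rho>])
  finally show ?case using Suc by simp
qed (simp add: B_seminorm_zero[OF \<rho>] B_seminormsD(1)[OF \<rho>])

lemma seminorm_binomial_le:
  assumes "\<And>k. k \<le> n \<Longrightarrow> \<rho> (a ^ k) * \<rho> (b ^ (n - k)) \<le> C" "0 \<le> C"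
  shows "\<rho> ((a + b) ^ n) \<le> C"
proof -
  have "\<rho> ((a + b) ^ n) = \<rho> (\<Sum>k\<le>n. of_nat (n choose k) * (a ^ k * b ^ (n - k)))"
    by (simp add: binomial_ring mult.assoc)
  also have "\<dots> \<le> C"
  proof (rule seminorm_sum_le)
    fix k assume "k \<in> {..n}"
    then show "\<rho> (of_nat (n choose k) * (a ^ k * b ^ (n - k))) \<le> C"
      using seminorm_of_nat_mult_le B_seminormsD(4)[OF \<rho>, of "a ^ k" "b ^ (n - k)"] assms(1)[of k]
      by (fastforce intro: order_trans)
  qed (use assms(2) in simp_all)
  finally show ?thesis .
qed


lemma spectral_le_root: "1 \<le> n \<Longrightarrow> spectral \<rho> g \<le> root n (\<rho> (g ^ n))"
  unfolding spectral_def
  by (rule cInf_lower) (auto intro!: bdd_below_nonneg real_root_ge_zero B_seminormsD(1)[OF \<rho>])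

lemma spectral_greatest: "(\<And>n. 1 \<le> n \<Longrightarrow> c \<le> root n (\<rho> (g ^ n))) \<Longrightarrow> c \<le> spectral \<rho> g"
  unfolding spectral_def by (rule cInf_greatest) auto

lemma spectral_nonneg: "0 \<le> spectral \<rho> g"
  by (rule spectral_greatest) (auto intro: real_root_ge_zero B_seminormsD(1)[OF \<rho>])

lemma spectral_le: "spectral \<rho> g \<le> \<rho> g"
  using spectral_le_root[of 1 g] by simp

lemma root_seminorm_power_mult_le:
  assumes "1 \<le> n" "1 \<le> m"
  shows "root (n * m) (\<rho> (g ^ (n * m))) \<le> root n (\<rho> (g ^ n))"
proof -
  have "root (n * m) (\<rho> (g ^ (n * m))) \<le> root (n * m) (\<rho> (g ^ n) ^ m)"
    using assms seminorm_power_mult by (subst real_root_le_iff) auto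
  also have "\<dots> = root n (\<rho> (g ^ n))" using assms B_seminormsD(1)[OF \<rho>] by (intro real_root_mult_power) auto
  finally show ?thesis .
qed

lemma spectral_one: "spectral \<rho> 1 = 1"
proof (rule antisym)
  show "spectral \<rho> 1 \<le> 1" using spectral_le[of 1] B_seminormsD(2)[OF \<rho>] by simp
  show "1 \<le> spectral \<rho> 1" by (rule spectral_greatest) (simp add: B_seminormsD(2)[OF \<rho>])
qed

lemma spectral_scalar: "b \<in> B \<Longrightarrow> spectral \<rho> (b * x) = H b * spectral \<rho> x"
proof -
  assume b: "b \<in> B"
  have "root n (\<rho> ((b * x) ^ n)) = H b * root n (\<rho> (x ^ n))" if "1 \<le> n" for n
  proof -
    have "\<rho> ((b * x) ^ n) = H b ^ n * \<rho> (x ^ n)"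
      using B_seminormsD(5)[OF \<rho> power_in_B[OF b, THEN conjunct1], of n "x ^ n"] power_in_B[OF b, of n]
      by (simp add: power_mult_distrib)
    then show ?thesis using that H_nonneg[OF b] by (simp add: real_root_mult real_root_power_cancel)
  qed
  then have "(\<lambda>n. root n (\<rho> ((b * x) ^ n))) ` {1..} = (\<lambda>n. H b * root n (\<rho> (x ^ n))) ` {1..}"
    by (intro image_cong) auto
  then show ?thesis unfolding spectral_def
    using cInf_mult_left[of "{1::nat..}" "\<lambda>n. root n (\<rho> (x ^ n))" "H b"] H_nonneg[OF b]
    by (auto intro: real_root_ge_zero B_seminormsD(1)[OF \<rho>])
qed

lemma spectral_mult: "spectral \<rho> (a * b) \<le> spectral \<rho> a * spectral \<rho> b"
  unfolding spectral_def[of \<rho> a] spectral_def[of \<rho> b]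
proof (rule le_cInf_mult)
  fix x y assume "x \<in> (\<lambda>n. root n (\<rho> (a ^ n))) ` {1..}" "y \<in> (\<lambda>n. root n (\<rho> (b ^ n))) ` {1..}"
  then obtain n m :: nat
    where nm: "1 \<le> n" "1 \<le> m" "x = root n (\<rho> (a ^ n))" "y = root m (\<rho> (b ^ m))" by auto
  have "spectral \<rho> (a * b) \<le> root (n * m) (\<rho> ((a * b) ^ (n * m)))"
    using nm by (intro spectral_le_root) auto
  also have "\<dots> \<le> root (n * m) (\<rho> (a ^ (n * m)) * \<rho> (b ^ (n * m)))"
    using nm B_seminormsD(4)[OF \<rho>] by (subst real_root_le_iff) (auto simp: power_mult_distrib)
  also have "\<dots> = root (n * m) (\<rho> (a ^ (n * m))) * root (m * n) (\<rho> (b ^ (m * n)))"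
    by (simp add: real_root_mult mult.commute)
  also have "\<dots> \<le> x * y"
    using nm root_seminorm_power_mult_le[of n m a] root_seminorm_power_mult_le[of m n b]
    by (intro mult_mono) (auto intro: real_root_ge_zero B_seminormsD(1)[OF \<rho>])
  finally show "spectral \<rho> (a * b) \<le> x * y" .
qed (auto intro: real_root_ge_zero B_seminormsD(1)[OF \<rho>])

lemma power_growth_bound:
  assumes e: "0 < e"
  shows "\<exists>C\<ge>0. \<forall>k. \<rho> (g ^ k) \<le> C * (spectral \<rho> g + e) ^ k"
proof -
  define q where "q = spectral \<rho> g + e"
  have q0: "0 < q" unfolding q_def using spectral_nonneg[of g] e by simp
  have "Inf ((\<lambda>n. root n (\<rho> (g ^ n))) ` {1..}) < q"
    unfolding q_def spectral_def[symmetric] using e by simp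
  then obtain N where N: "1 \<le> N" "root N (\<rho> (g ^ N)) < q"
    using cInf_lessD[of "(\<lambda>n. root n (\<rho> (g ^ n))) ` {1..}" q] by auto
  have gN: "\<rho> (g ^ N) \<le> q ^ N"
  proof -
    have "\<rho> (g ^ N) = root N (\<rho> (g ^ N)) ^ N" using N(1) B_seminormsD(1)[OF \<rho>] by simp
    also have "\<dots> \<le> q ^ N" using N by (intro power_mono) (auto intro: real_root_ge_zero B_seminormsD(1)[OF \<rho>])
    finally show ?thesis .
  qed
  \<comment> \<open>write \<open>k = N * d + j\<close> with \<open>j < N\<close>; \<open>C\<close> absorbs the finitely many residues \<open>j\<close>\<close>
  define C where "C = Max ((\<lambda>j. \<rho> (g ^ j) / q ^ j) ` {..<N})"
  have C_ge: "\<rho> (g ^ j) / q ^ j \<le> C" if "j < N" for j unfolding C_def using that by (intro Max_ge) auto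
  have C0: "0 \<le> C" using C_ge[of 0] N q0 B_seminormsD(1)[OF \<rho>, of 1] by (auto intro: order_trans[OF _ C_ge[of 0]])
  have "\<rho> (g ^ k) \<le> C * q ^ k" for k
  proof -
    define d where "d = k div N"
    define j where "j = k mod N"
    have k: "k = N * d + j" and jN: "j < N" unfolding d_def j_def using N by simp_all
    have "\<rho> (g ^ k) \<le> \<rho> (g ^ (N * d)) * \<rho> (g ^ j)" unfolding k by (rule seminorm_power_add)
    also have "\<dots> \<le> (q ^ N) ^ d * (C * q ^ j)"
    proof (intro mult_mono)
      show "\<rho> (g ^ (N * d)) \<le> (q ^ N) ^ d"
        using seminorm_power_mult[of g N d] power_mono[OF gN B_seminormsD(1)[OF \<rho>], of d] by linarith
      show "\<rho> (g ^ j) \<le> C * q ^ j" using C_ge[OF jN] q0 by (simp add: divide_le_eq)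
    qed (use q0 B_seminormsD(1)[OF \<rho>] in auto)
    also have "\<dots> = C * q ^ k" unfolding k by (simp add: power_add power_mult)
    finally show ?thesis .
  qed
  then show ?thesis using C0 unfolding q_def by blast
qed

lemma spectral_add: "spectral \<rho> (a + b) \<le> max (spectral \<rho> a) (spectral \<rho> b)"
proof (rule field_le_epsilon)
  fix e :: real assume e: "0 < e"
  obtain Ca where Ca: "Ca \<ge> 0" "\<And>k. \<rho> (a ^ k) \<le> Ca * (spectral \<rho> a + e) ^ k"
    using power_growth_bound[OF e] by blast
  obtain Cb where Cb: "Cb \<ge> 0" "\<And>k. \<rho> (b ^ k) \<le> Cb * (spectral \<rho> b + e) ^ k"
    using power_growth_bound[OF e] by blast
  define M where "M = max (spectral \<rho> a) (spectral \<rho> b) + e"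
  have M0: "0 \<le> M" unfolding M_def using spectral_nonneg[of a] e by simp
  have bound: "\<rho> ((a + b) ^ n) \<le> (Ca * Cb) * M ^ n" for n
  proof (rule seminorm_binomial_le)
    fix k assume k: "k \<le> n"
    have "\<rho> (a ^ k) * \<rho> (b ^ (n - k)) \<le> (Ca * (spectral \<rho> a + e) ^ k) * (Cb * (spectral \<rho> b + e) ^ (n - k))"
      using Ca Cb B_seminormsD(1)[OF \<rho>] spectral_nonneg[of a] e by (intro mult_mono) auto
    also have "\<dots> \<le> (Ca * M ^ k) * (Cb * M ^ (n - k))"
      using Ca Cb spectral_nonneg[of a] spectral_nonneg[of b] e M0
      by (intro mult_mono mult_left_mono power_mono) (auto simp: M_def)
    also have "\<dots> = (Ca * Cb) * M ^ n" using k by (simp add: algebra_simps power_add[symmetric])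
    finally show "\<rho> (a ^ k) * \<rho> (b ^ (n - k)) \<le> (Ca * Cb) * M ^ n" .
  qed (use Ca Cb M0 in simp)
  have le: "spectral \<rho> (a + b) \<le> root n (Ca * Cb) * M" if "1 \<le> n" for n
  proof -
    have "spectral \<rho> (a + b) \<le> root n (\<rho> ((a + b) ^ n))" using that by (rule spectral_le_root)
    also have "\<dots> \<le> root n ((Ca * Cb) * M ^ n)" using that bound by (subst real_root_le_iff) auto
    also have "\<dots> = root n (Ca * Cb) * M" using that M0 by (simp add: real_root_mult real_root_power_cancel)
    finally show ?thesis .
  qed
  have "spectral \<rho> (a + b) \<le> M"
  proof (cases "Ca * Cb = 0")
    case True then show ?thesis using le[of 1] M0 by (cases "Ca = 0") auto
  next
    case False
    then have "0 < Ca * Cb" using Ca Cb by simp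
    then have "(\<lambda>n. root n (Ca * Cb) * M) \<longlonglongrightarrow> 1 * M"
      by (intro tendsto_mult LIMSEQ_root_const tendsto_const)
    then have "spectral \<rho> (a + b) \<le> 1 * M"
      by (rule LIMSEQ_le_const) (use le in \<open>auto intro!: exI[of _ 1]\<close>)
    then show ?thesis by simp
  qed
  then show "spectral \<rho> (a + b) \<le> max (spectral \<rho> a) (spectral \<rho> b) + e" unfolding M_def .
qed

lemma spectral_in_B_seminorms: "spectral \<rho> \<in> B_seminorms"
  by (rule B_seminormsI) (auto intro: spectral_nonneg spectral_one spectral_add spectral_mult spectral_scalar)

end

end

context weighted_monoid
begin

definition minimal_B_seminorm :: "('r \<Rightarrow> real) \<Rightarrow> bool" where
  "minimal_B_seminorm \<rho> \<longleftrightarrow> \<rho> \<in> B_seminorms \<and> (\<forall>\<rho>'\<in>B_seminorms. (\<forall>x. \<rho>' x \<le> \<rho> x) \<longrightarrow> \<rho>' = \<rho>)"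

lemma minimal_power_mult:
  assumes m: "minimal_B_seminorm \<rho>"
  shows "\<rho> (g ^ n) = \<rho> g ^ n"
proof -
  have \<rho>: "\<rho> \<in> B_seminorms" using m unfolding minimal_B_seminorm_def by auto
  have "spectral \<rho> = \<rho>"
    using m spectral_in_B_seminorms[OF \<rho>] spectral_le[OF \<rho>] unfolding minimal_B_seminorm_def by blast
  show ?thesis
  proof (cases "n = 0")
    case True then show ?thesis using B_seminormsD(2)[OF \<rho>] by simp
  next
    case False
    have "\<rho> g \<le> root n (\<rho> (g ^ n))"
      using spectral_le_root[OF \<rho>, of n g] False \<open>spectral \<rho> = \<rho>\<close> by simp
    then have "\<rho> g ^ n \<le> root n (\<rho> (g ^ n)) ^ n"
      using B_seminormsD(1)[OF \<rho>] by (intro power_mono) auto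
    also have "\<dots> = \<rho> (g ^ n)" using False B_seminormsD(1)[OF \<rho>] by simp
    finally show ?thesis using seminorm_power_le[OF \<rho>, of g n] by simp
  qed
qed

text \<open>Dividing out the powers of \<open>a\<close>; for minimal \<open>\<rho>\<close> this changes nothing,
  which forces \<open>\<rho>(a b) = \<rho>(a) \<rho>(b)\<close>.\<close>

definition shifted :: "('r \<Rightarrow> real) \<Rightarrow> 'r \<Rightarrow> 'r \<Rightarrow> real" where
  "shifted \<rho> a g = Inf (range (\<lambda>n. \<rho> (a ^ n * g) / \<rho> a ^ n))"

context
  fixes \<rho> a
  assumes \<rho>: "\<rho> \<in> B_seminorms" and pos: "0 < \<rho> a" and power: "\<And>n. \<rho> (a ^ n) = \<rho> a ^ n"
begin

lemma shifted_quotient_nonneg: "0 \<le> \<rho> (a ^ n * g) / \<rho> a ^ n"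
  using B_seminormsD(1)[OF \<rho>] pos by simp

lemma shifted_le: "shifted \<rho> a g \<le> \<rho> (a ^ n * g) / \<rho> a ^ n"
  unfolding shifted_def
  by (rule cInf_lower) (auto intro!: bdd_below_nonneg shifted_quotient_nonneg)

lemma shifted_quotient_antimono:
  assumes "n \<le> m"
  shows "\<rho> (a ^ m * g) / \<rho> a ^ m \<le> \<rho> (a ^ n * g) / \<rho> a ^ n" (is "?A g m \<le> ?A g n")
proof -
  have "?A g (Suc k) \<le> ?A g k" for k
  proof -
    have "\<rho> (a ^ Suc k * g) \<le> \<rho> a * \<rho> (a ^ k * g)"
      using B_seminormsD(4)[OF \<rho>, of a "a ^ k * g"] by (simp add: mult.assoc)
    then show ?thesis using pos by (simp add: divide_le_eq field_simps)
  qed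
  then show ?thesis using decseqD[OF decseq_SucI[of "?A g"] assms] by blast
qed

lemma shifted_add: "shifted \<rho> a (x + y) \<le> max (shifted \<rho> a x) (shifted \<rho> a y)"
  unfolding shifted_def[of \<rho> a x] shifted_def[of \<rho> a y]
proof (rule le_max_cInf)
  fix s t assume "s \<in> range (\<lambda>n. \<rho> (a ^ n * x) / \<rho> a ^ n)" "t \<in> range (\<lambda>n. \<rho> (a ^ n * y) / \<rho> a ^ n)"
  then obtain n n' where st: "s = \<rho> (a ^ n * x) / \<rho> a ^ n" "t = \<rho> (a ^ n' * y) / \<rho> a ^ n'" by auto
  define k where "k = max n n'"
  have "shifted \<rho> a (x + y) \<le> \<rho> (a ^ k * (x + y)) / \<rho> a ^ k" by (rule shifted_le)
  also have "\<dots> \<le> max (\<rho> (a ^ k * x)) (\<rho> (a ^ k * y)) / \<rho> a ^ k"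
    using B_seminormsD(3)[OF \<rho>, of "a ^ k * x" "a ^ k * y"] pos
    by (simp add: distrib_left divide_right_mono)
  also have "\<dots> = max (\<rho> (a ^ k * x) / \<rho> a ^ k) (\<rho> (a ^ k * y) / \<rho> a ^ k)"
    using pos by (simp add: max_divide_distrib_right)
  also have "\<dots> \<le> max s t"
    using shifted_quotient_antimono[of n k x] shifted_quotient_antimono[of n' k y] st
    unfolding k_def by auto
  finally show "shifted \<rho> a (x + y) \<le> max s t" .
qed (auto intro!: bdd_below_nonneg shifted_quotient_nonneg)

lemma shifted_mult: "shifted \<rho> a (x * y) \<le> shifted \<rho> a x * shifted \<rho> a y"
  unfolding shifted_def[of \<rho> a x] shifted_def[of \<rho> a y]
proof (rule le_cInf_mult)
  fix s t assume "s \<in> range (\<lambda>n. \<rho> (a ^ n * x) / \<rho> a ^ n)" "t \<in> range (\<lambda>n. \<rho> (a ^ n * y) / \<rho> a ^ n)"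
  then obtain n n' where st: "s = \<rho> (a ^ n * x) / \<rho> a ^ n" "t = \<rho> (a ^ n' * y) / \<rho> a ^ n'" by auto
  define k where "k = max n n'"
  have "\<rho> (a ^ (k + k) * (x * y)) = \<rho> ((a ^ k * x) * (a ^ k * y))"
    by (simp add: power_add algebra_simps)
  also have "\<dots> \<le> \<rho> (a ^ k * x) * \<rho> (a ^ k * y)" by (rule B_seminormsD(4)[OF \<rho>])
  finally have "shifted \<rho> a (x * y) \<le> (\<rho> (a ^ k * x) / \<rho> a ^ k) * (\<rho> (a ^ k * y) / \<rho> a ^ k)"
    using shifted_le[of "x * y" "k + k"] pos
    by (simp add: power_add) (meson divide_right_mono order_trans zero_le_mult_iff zero_le_power less_imp_le)
  also have "\<dots> \<le> s * t"
    using shifted_quotient_antimono[of n k x] shifted_quotient_antimono[of n' k y] st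
      shifted_quotient_nonneg
    unfolding k_def by (intro mult_mono) auto
  finally show "shifted \<rho> a (x * y) \<le> s * t" .
qed (auto intro: shifted_quotient_nonneg)

lemma shifted_scalar: "b \<in> B \<Longrightarrow> shifted \<rho> a (b * x) = H b * shifted \<rho> a x"
proof -
  assume b: "b \<in> B"
  have "\<rho> (a ^ n * (b * x)) / \<rho> a ^ n = H b * (\<rho> (a ^ n * x) / \<rho> a ^ n)" for n
    using B_seminormsD(5)[OF \<rho> b, of "a ^ n * x"] by (simp add: algebra_simps)
  then have "range (\<lambda>n. \<rho> (a ^ n * (b * x)) / \<rho> a ^ n) = (\<lambda>n. H b * (\<rho> (a ^ n * x) / \<rho> a ^ n)) ` UNIV"
    by (intro image_cong) auto
  then show ?thesis
    unfolding shifted_def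
    using cInf_mult_left[of UNIV "\<lambda>n. \<rho> (a ^ n * x) / \<rho> a ^ n" "H b"] H_nonneg[OF b]
      shifted_quotient_nonneg
    by auto
qed

lemma shifted_in_B_seminorms: "shifted \<rho> a \<in> B_seminorms"
proof (rule B_seminormsI)
  show "0 \<le> shifted \<rho> a x" for x
    unfolding shifted_def by (rule cInf_nonneg) (auto intro: shifted_quotient_nonneg)
  have "range (\<lambda>n. \<rho> (a ^ n * 1) / \<rho> a ^ n) = {1}" using power pos by auto
  then show "shifted \<rho> a 1 = 1" unfolding shifted_def by simp
qed (auto intro: shifted_add shifted_mult shifted_scalar)

end

lemma minimal_mult:
  assumes m: "minimal_B_seminorm \<rho>"
  shows "\<rho> (a * b) = \<rho> a * \<rho> b"
proof -
  have \<rho>: "\<rho> \<in> B_seminorms" using m unfolding minimal_B_seminorm_def by auto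
  show ?thesis
  proof (cases "\<rho> a = 0")
    case True
    then show ?thesis
      using B_seminormsD(4)[OF \<rho>, of a b] B_seminormsD(1)[OF \<rho>, of "a * b"] by simp
  next
    case False
    then have pos: "0 < \<rho> a" using B_seminormsD(1)[OF \<rho>, of a] by simp
    have le: "shifted \<rho> a g \<le> \<rho> (a ^ n * g) / \<rho> a ^ n" for g n
      using shifted_le[OF \<rho> pos minimal_power_mult[OF m]] .
    have "shifted \<rho> a = \<rho>"
      using m shifted_in_B_seminorms[OF \<rho> pos minimal_power_mult[OF m]] le[where n = 0]
      unfolding minimal_B_seminorm_def by auto
    then have "\<rho> b \<le> \<rho> (a * b) / \<rho> a" using le[of b 1] by simp
    then show ?thesis using pos B_seminormsD(4)[OF \<rho>, of a b] by (simp add: le_divide_eq mult.commute)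
  qed
qed



lemma chain_Inf_in_B_seminorms:
  assumes C: "C \<subseteq> B_seminorms" "C \<noteq> {}"
    and chain: "\<And>\<rho>1 \<rho>2. \<rho>1 \<in> C \<Longrightarrow> \<rho>2 \<in> C \<Longrightarrow> (\<forall>t. \<rho>1 t \<le> \<rho>2 t) \<or> (\<forall>t. \<rho>2 t \<le> \<rho>1 t)"
  shows "(\<lambda>t. Inf ((\<lambda>\<rho>. \<rho> t) ` C)) \<in> B_seminorms"
proof -
  let ?u = "\<lambda>t. Inf ((\<lambda>\<rho>. \<rho> t) ` C)"
  have nonneg: "0 \<le> \<rho> t" if "\<rho> \<in> C" for \<rho> t using that C B_seminormsD(1) by blast
  have bdd: "bdd_below ((\<lambda>\<rho>. \<rho> t) ` C)" for t using nonneg by (intro bdd_below_nonneg) auto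
  have u_le: "?u t \<le> \<rho> t" if "\<rho> \<in> C" for \<rho> t using that by (intro cInf_lower[OF _ bdd]) auto
  have below_both: "\<exists>\<rho>\<in>C. \<forall>t. \<rho> t \<le> \<rho>1 t \<and> \<rho> t \<le> \<rho>2 t" if "\<rho>1 \<in> C" "\<rho>2 \<in> C" for \<rho>1 \<rho>2
    using chain[OF that] that by auto
  show ?thesis
  proof (rule B_seminormsI)
    show "0 \<le> ?u x" for x using C(2) by (intro cInf_nonneg) (auto intro: nonneg)
    have "(\<lambda>\<rho>. \<rho> 1) ` C = {1}" using C B_seminormsD(2) by force
    then show "?u 1 = 1" by simp
    show "?u (a + b) \<le> max (?u a) (?u b)" for a b
    proof (rule le_max_cInf)
      fix s t assume "s \<in> (\<lambda>\<rho>. \<rho> a) ` C" "t \<in> (\<lambda>\<rho>. \<rho> b) ` C"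
      then obtain \<rho>1 \<rho>2 where p: "\<rho>1 \<in> C" "\<rho>2 \<in> C" "s = \<rho>1 a" "t = \<rho>2 b" by auto
      obtain \<rho> where \<rho>: "\<rho> \<in> C" "\<forall>t. \<rho> t \<le> \<rho>1 t \<and> \<rho> t \<le> \<rho>2 t" using below_both[OF p(1,2)] by blast
      have "?u (a + b) \<le> \<rho> (a + b)" by (rule u_le[OF \<rho>(1)])
      also have "\<dots> \<le> max (\<rho> a) (\<rho> b)" using \<rho>(1) C(1) B_seminormsD(3) by blast
      also have "\<dots> \<le> max s t" using \<rho>(2) p by (intro max.mono) auto
      finally show "?u (a + b) \<le> max s t" .
    qed (use C(2) bdd in auto)
    show "?u (a * b) \<le> ?u a * ?u b" for a b
    proof (rule le_cInf_mult)
      fix s t assume "s \<in> (\<lambda>\<rho>. \<rho> a) ` C" "t \<in> (\<lambda>\<rho>. \<rho> b) ` C"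
      then obtain \<rho>1 \<rho>2 where p: "\<rho>1 \<in> C" "\<rho>2 \<in> C" "s = \<rho>1 a" "t = \<rho>2 b" by auto
      obtain \<rho> where \<rho>: "\<rho> \<in> C" "\<forall>t. \<rho> t \<le> \<rho>1 t \<and> \<rho> t \<le> \<rho>2 t" using below_both[OF p(1,2)] by blast
      have "?u (a * b) \<le> \<rho> (a * b)" by (rule u_le[OF \<rho>(1)])
      also have "\<dots> \<le> \<rho> a * \<rho> b" using \<rho>(1) C(1) B_seminormsD(4) by blast
      also have "\<dots> \<le> s * t" using \<rho> p nonneg by (intro mult_mono) auto
      finally show "?u (a * b) \<le> s * t" .
    qed (use C(2) nonneg in auto)
    show "?u (b * x) = H b * ?u x" if b: "b \<in> B" for b x
    proof -
      have "(\<lambda>\<rho>. \<rho> (b * x)) ` C = (\<lambda>\<rho>. H b * \<rho> x) ` C" using C B_seminormsD(5) b by force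
      then show ?thesis using cInf_mult_left[of C "\<lambda>\<rho>. \<rho> x" "H b"] C(2) nonneg H_nonneg[OF b] by auto
    qed
  qed
qed

lemma exists_minimal_B_seminorm:
  assumes "\<rho>0 \<in> B_seminorms"
  shows "\<exists>\<rho>. minimal_B_seminorm \<rho>"
proof -
  define R where "R = {(x, y). x \<in> B_seminorms \<and> y \<in> B_seminorms \<and> (\<forall>t. y t \<le> x t)}"
  have F: "Field R = B_seminorms" unfolding R_def Field_def by auto
  have po: "Partial_order R"
    unfolding partial_order_on_def preorder_on_def refl_on_def trans_on_def antisym_on_def F
    unfolding R_def by (auto simp: fun_eq_iff intro: order_trans antisym)
  have "\<exists>m\<in>Field R. \<forall>a\<in>Field R. (m, a) \<in> R \<longrightarrow> a = m"
  proof (rule Zorns_po_lemma[OF po])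
    fix C assume C: "C \<in> Chains R"
    show "\<exists>u\<in>Field R. \<forall>a\<in>C. (a, u) \<in> R"
    proof (cases "C = {}")
      case True then show ?thesis using assms F by auto
    next
      case False
      have CS: "C \<subseteq> B_seminorms" using C unfolding Chains_def R_def by auto
      let ?u = "\<lambda>t. Inf ((\<lambda>\<rho>. \<rho> t) ` C)"
      have u: "?u \<in> B_seminorms"
        using CS False by (rule chain_Inf_in_B_seminorms) (use C in \<open>auto simp: Chains_def R_def\<close>)
      have "(a, ?u) \<in> R" if "a \<in> C" for a
        using that u CS B_seminormsD(1) unfolding R_def
        by (auto intro!: cInf_lower bdd_below_nonneg)
      then show ?thesis using u F by auto
    qed
  qed
  then obtain m where "m \<in> B_seminorms" "\<forall>a\<in>B_seminorms. (m, a) \<in> R \<longrightarrow> a = m"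
    unfolding F by blast
  then show ?thesis unfolding minimal_B_seminorm_def R_def by auto
qed

lemma exists_mult_B_seminorm:
  assumes "B_seminorms \<noteq> {}"
  shows "\<exists>\<rho>\<in>B_seminorms. \<forall>a b. \<rho> (a * b) = \<rho> a * \<rho> b"
  using exists_minimal_B_seminorm assms minimal_mult unfolding minimal_B_seminorm_def by blast

end

lemma sum_list_products:
  fixes bs cs :: "'a::semiring_0 list"
  shows "sum_list [b * c. b \<leftarrow> bs, c \<leftarrow> cs] = sum_list bs * sum_list cs"
  by (induction bs) (auto simp: distrib_right sum_list_const_mult)

locale spanning_weighted_monoid = weighted_monoid +
  assumes spans: "\<And>r. \<exists>bs. set bs \<subseteq> B \<and> sum_list bs = r"
    and H_sum_list_le: "\<And>a bs. a \<in> B \<Longrightarrow> set bs \<subseteq> B \<Longrightarrow> a = sum_list bs \<Longrightarrow> H a \<le> max_weight H bs"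
begin

definition reps where
  "reps r = {bs. set bs \<subseteq> B \<and> sum_list bs = r}"

text \<open>The largest ultrametric function bounded by \<open>H\<close> on \<open>B\<close>.\<close>

definition rep_norm where
  "rep_norm r = Inf (max_weight H ` reps r)"

lemma reps_nonempty: "reps r \<noteq> {}"
  using spans unfolding reps_def by blast

lemma rep_norm_le: "bs \<in> reps r \<Longrightarrow> rep_norm r \<le> max_weight H bs"
  unfolding rep_norm_def by (rule cInf_lower) (auto intro: bdd_below_nonneg max_weight_nonneg)

lemma rep_norm_greatest: "(\<And>bs. bs \<in> reps r \<Longrightarrow> c \<le> max_weight H bs) \<Longrightarrow> c \<le> rep_norm r"
  unfolding rep_norm_def using reps_nonempty by (intro cInf_greatest) auto

lemma rep_norm_nonneg: "0 \<le> rep_norm r"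
  by (rule rep_norm_greatest) (rule max_weight_nonneg)

lemma rep_norm_B: assumes b: "b \<in> B" shows "rep_norm b = H b"
proof (rule antisym)
  have "[b] \<in> reps b" unfolding reps_def using b by auto
  then show "rep_norm b \<le> H b" using rep_norm_le[of "[b]" b] H_nonneg[OF b] by simp
  show "H b \<le> rep_norm b"
    by (rule rep_norm_greatest) (use H_sum_list_le b in \<open>auto simp: reps_def\<close>)
qed

lemma rep_norm_add: "rep_norm (x + y) \<le> max (rep_norm x) (rep_norm y)"
  unfolding rep_norm_def[of x] rep_norm_def[of y]
proof (rule le_max_cInf)
  fix s t assume "s \<in> max_weight H ` reps x" "t \<in> max_weight H ` reps y"
  then obtain bs cs where bc: "bs \<in> reps x" "cs \<in> reps y" "s = max_weight H bs" "t = max_weight H cs"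
    by auto
  have "bs @ cs \<in> reps (x + y)" using bc unfolding reps_def by auto
  then have "rep_norm (x + y) \<le> max_weight H (bs @ cs)" by (rule rep_norm_le)
  then show "rep_norm (x + y) \<le> max s t" unfolding max_weight_append bc(3,4) .
qed (use reps_nonempty in \<open>auto intro: bdd_below_nonneg max_weight_nonneg\<close>)

lemma rep_norm_mult: "rep_norm (x * y) \<le> rep_norm x * rep_norm y"
  unfolding rep_norm_def[of x] rep_norm_def[of y]
proof (rule le_cInf_mult)
  fix s t assume "s \<in> max_weight H ` reps x" "t \<in> max_weight H ` reps y"
  then obtain bs cs where bc: "bs \<in> reps x" "cs \<in> reps y" "s = max_weight H bs" "t = max_weight H cs"
    by auto
  have B: "set bs \<subseteq> B" "set cs \<subseteq> B" using bc unfolding reps_def by auto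
  have "[b * c. b \<leftarrow> bs, c \<leftarrow> cs] \<in> reps (x * y)"
    using bc B sum_list_products unfolding reps_def by (auto intro: mult_in_B)
  then have "rep_norm (x * y) \<le> max_weight H [b * c. b \<leftarrow> bs, c \<leftarrow> cs]" by (rule rep_norm_le)
  also have "\<dots> \<le> s * t"
  proof (rule max_weight_le)
    fix z assume "z \<in> set [b * c. b \<leftarrow> bs, c \<leftarrow> cs]"
    then obtain b c where z: "b \<in> set bs" "c \<in> set cs" "z = b * c" by auto
    have "H z = H b * H c" using z B H_mult by auto
    also have "\<dots> \<le> s * t" using bc z max_weight_ge max_weight_nonneg H_nonneg B by (intro mult_mono) auto
    finally show "H z \<le> s * t" .
  qed (simp add: bc max_weight_nonneg)
  finally show "rep_norm (x * y) \<le> s * t" .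
qed (use reps_nonempty in \<open>auto intro: max_weight_nonneg\<close>)

lemma rep_norm_scalar: assumes b: "b \<in> B" shows "rep_norm (b * x) \<le> H b * rep_norm x"
  unfolding rep_norm_def[of x]
proof (rule le_mult_cInf)
  fix t assume "t \<in> max_weight H ` reps x"
  then obtain bs where bs: "bs \<in> reps x" "t = max_weight H bs" by auto
  have B: "set bs \<subseteq> B" using bs unfolding reps_def by auto
  have "map (\<lambda>c. b * c) bs \<in> reps (b * x)"
    using bs b B unfolding reps_def by (auto intro: mult_in_B simp: sum_list_const_mult)
  then have "rep_norm (b * x) \<le> max_weight H (map (\<lambda>c. b * c) bs)" by (rule rep_norm_le)
  also have "\<dots> \<le> H b * t"
  proof (rule max_weight_le)
    fix z assume "z \<in> set (map (\<lambda>c. b * c) bs)"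
    then obtain c where c: "c \<in> set bs" "z = b * c" by auto
    have "H z = H b * H c" using c B H_mult b by auto
    also have "\<dots> \<le> H b * t" using bs c max_weight_ge H_nonneg[OF b] by (intro mult_left_mono) auto
    finally show "H z \<le> H b * t" .
  qed (simp add: bs H_nonneg[OF b] max_weight_nonneg)
  finally show "rep_norm (b * x) \<le> H b * t" .
qed (use reps_nonempty H_nonneg[OF b] in \<open>auto intro: bdd_below_nonneg max_weight_nonneg\<close>)


definition B_pos where
  "B_pos = {b \<in> B. 0 < H b}"

text \<open>\<open>rep_norm\<close> is only subhomogeneous over \<open>B\<close>; normalizing by the elements of
  positive weight makes it homogeneous.\<close>

definition normalized_norm where
  "normalized_norm r = Inf ((\<lambda>b. rep_norm (b * r) / H b) ` B_pos)"

lemma one_in_B_pos: "1 \<in> B_pos"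
  unfolding B_pos_def using one_in_B H_one by auto

lemma mult_in_B_pos: "b1 \<in> B_pos \<Longrightarrow> b2 \<in> B_pos \<Longrightarrow> b1 * b2 \<in> B_pos"
  unfolding B_pos_def using mult_in_B H_mult by auto

lemma B_posD: "b \<in> B_pos \<Longrightarrow> b \<in> B" "b \<in> B_pos \<Longrightarrow> 0 < H b"
  unfolding B_pos_def by auto

lemma normalized_quotient_nonneg: "b \<in> B_pos \<Longrightarrow> 0 \<le> rep_norm (b * r) / H b"
  using rep_norm_nonneg[of "b * r"] B_posD(2)[of b] by simp

lemma normalized_norm_le: "b \<in> B_pos \<Longrightarrow> normalized_norm r \<le> rep_norm (b * r) / H b"
  unfolding normalized_norm_def
  by (rule cInf_lower) (auto intro!: bdd_below_nonneg normalized_quotient_nonneg)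

lemma normalized_norm_greatest:
  "(\<And>b. b \<in> B_pos \<Longrightarrow> c \<le> rep_norm (b * r) / H b) \<Longrightarrow> c \<le> normalized_norm r"
  unfolding normalized_norm_def using one_in_B_pos by (intro cInf_greatest) auto

lemma normalized_norm_nonneg: "0 \<le> normalized_norm r"
  by (rule normalized_norm_greatest) (rule normalized_quotient_nonneg)

lemma normalized_quotient_mult_le:
  assumes "b1 \<in> B_pos" "b2 \<in> B_pos"
  shows "rep_norm ((b1 * b2) * r) / H (b1 * b2) \<le> rep_norm (b1 * r) / H b1"
proof -
  have "rep_norm ((b1 * b2) * r) = rep_norm (b2 * (b1 * r))" by (simp add: algebra_simps)
  also have "\<dots> \<le> H b2 * rep_norm (b1 * r)" by (rule rep_norm_scalar[OF B_posD(1)[OF assms(2)]])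
  finally show ?thesis
    using H_mult[OF B_posD(1)[OF assms(1)] B_posD(1)[OF assms(2)]] B_posD(2)[OF assms(1)]
      B_posD(2)[OF assms(2)]
    by (simp add: divide_le_eq field_simps)
qed

lemma normalized_norm_one: "normalized_norm 1 = 1"
proof (rule antisym)
  show "normalized_norm 1 \<le> 1"
    using normalized_norm_le[OF one_in_B_pos, of 1] rep_norm_B[OF one_in_B] H_one by simp
  show "1 \<le> normalized_norm 1"
    by (rule normalized_norm_greatest) (simp add: rep_norm_B B_posD less_imp_neq[symmetric])
qed

lemma normalized_norm_add: "normalized_norm (x + y) \<le> max (normalized_norm x) (normalized_norm y)"
  unfolding normalized_norm_def[of x] normalized_norm_def[of y]
proof (rule le_max_cInf)
  fix s t
  assume "s \<in> (\<lambda>b. rep_norm (b * x) / H b) ` B_pos" "t \<in> (\<lambda>b. rep_norm (b * y) / H b) ` B_pos"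
  then obtain b1 b2 where b: "b1 \<in> B_pos" "b2 \<in> B_pos"
    "s = rep_norm (b1 * x) / H b1" "t = rep_norm (b2 * y) / H b2" by auto
  have bp: "b1 * b2 \<in> B_pos" by (rule mult_in_B_pos[OF b(1,2)])
  have hp: "0 < H (b1 * b2)" using B_posD(2)[OF bp] .
  have "normalized_norm (x + y) \<le> rep_norm ((b1 * b2) * (x + y)) / H (b1 * b2)"
    by (rule normalized_norm_le[OF bp])
  also have "\<dots> \<le> max (rep_norm ((b1 * b2) * x)) (rep_norm ((b1 * b2) * y)) / H (b1 * b2)"
    using rep_norm_add[of "(b1 * b2) * x" "(b1 * b2) * y"] hp
    by (intro divide_right_mono) (auto simp: distrib_left)
  also have "\<dots> = max (rep_norm ((b1 * b2) * x) / H (b1 * b2)) (rep_norm ((b1 * b2) * y) / H (b1 * b2))"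
    using hp by (simp add: max_divide_distrib_right)
  also have "\<dots> \<le> max s t"
    using normalized_quotient_mult_le[OF b(1,2), of x] normalized_quotient_mult_le[OF b(2,1), of y] b
    by (intro max.mono) (simp_all add: mult.commute)
  finally show "normalized_norm (x + y) \<le> max s t" .
qed (use one_in_B_pos in \<open>auto intro!: bdd_below_nonneg normalized_quotient_nonneg\<close>)

lemma normalized_norm_mult: "normalized_norm (x * y) \<le> normalized_norm x * normalized_norm y"
  unfolding normalized_norm_def[of x] normalized_norm_def[of y]
proof (rule le_cInf_mult)
  fix s t
  assume "s \<in> (\<lambda>b. rep_norm (b * x) / H b) ` B_pos" "t \<in> (\<lambda>b. rep_norm (b * y) / H b) ` B_pos"
  then obtain b1 b2 where b: "b1 \<in> B_pos" "b2 \<in> B_pos"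
    "s = rep_norm (b1 * x) / H b1" "t = rep_norm (b2 * y) / H b2" by auto
  have bp: "b1 * b2 \<in> B_pos" by (rule mult_in_B_pos[OF b(1,2)])
  have "normalized_norm (x * y) \<le> rep_norm ((b1 * b2) * (x * y)) / H (b1 * b2)"
    by (rule normalized_norm_le[OF bp])
  also have "rep_norm ((b1 * b2) * (x * y)) = rep_norm ((b1 * x) * (b2 * y))"
    by (simp add: algebra_simps)
  also have "rep_norm ((b1 * x) * (b2 * y)) / H (b1 * b2) \<le> rep_norm (b1 * x) * rep_norm (b2 * y) / H (b1 * b2)"
    using rep_norm_mult B_posD(2)[OF bp] by (intro divide_right_mono) auto
  also have "\<dots> = s * t" using b H_mult[OF B_posD(1) B_posD(1)] by simp
  finally show "normalized_norm (x * y) \<le> s * t" .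
qed (use one_in_B_pos in \<open>auto intro: normalized_quotient_nonneg\<close>)

lemma normalized_norm_scalar:
  assumes c: "c \<in> B"
  shows "normalized_norm (c * x) = H c * normalized_norm x"
proof (rule antisym)
  show "normalized_norm (c * x) \<le> H c * normalized_norm x"
    unfolding normalized_norm_def[of x]
  proof (rule le_mult_cInf)
    fix t assume "t \<in> (\<lambda>b. rep_norm (b * x) / H b) ` B_pos"
    then obtain b where b: "b \<in> B_pos" "t = rep_norm (b * x) / H b" by auto
    have "normalized_norm (c * x) \<le> rep_norm (b * (c * x)) / H b" by (rule normalized_norm_le[OF b(1)])
    also have "rep_norm (b * (c * x)) = rep_norm (c * (b * x))" by (simp add: algebra_simps)
    also have "rep_norm (c * (b * x)) / H b \<le> H c * rep_norm (b * x) / H b"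
      using rep_norm_scalar[OF c, of "b * x"] B_posD(2)[OF b(1)] by (intro divide_right_mono) auto
    finally show "normalized_norm (c * x) \<le> H c * t" using b(2) by simp
  qed (use one_in_B_pos H_nonneg[OF c] in \<open>auto intro!: bdd_below_nonneg normalized_quotient_nonneg\<close>)
  show "H c * normalized_norm x \<le> normalized_norm (c * x)"
  proof (cases "H c = 0")
    case True then show ?thesis using normalized_norm_nonneg by simp
  next
    case False
    then have c_pos: "c \<in> B_pos" using c H_nonneg[OF c] unfolding B_pos_def by auto
    show ?thesis
    proof (rule normalized_norm_greatest)
      fix b assume b: "b \<in> B_pos"
      have "H c * normalized_norm x \<le> H c * (rep_norm ((b * c) * x) / H (b * c))"
        using normalized_norm_le[OF mult_in_B_pos[OF b c_pos]] H_nonneg[OF c]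
        by (intro mult_left_mono) auto
      also have "\<dots> = rep_norm (b * (c * x)) / H b"
        using H_mult[OF B_posD(1)[OF b] c] B_posD(2)[OF c_pos] by (simp add: algebra_simps)
      finally show "H c * normalized_norm x \<le> rep_norm (b * (c * x)) / H b" .
    qed
  qed
qed

lemma normalized_norm_in_B_seminorms: "normalized_norm \<in> B_seminorms"
  by (rule B_seminormsI)
     (auto intro: normalized_norm_nonneg normalized_norm_one normalized_norm_add
        normalized_norm_mult normalized_norm_scalar)

lemma exists_mult_seminorm_extending:
  "\<exists>w. (\<forall>x. 0 \<le> w x) \<and> w 0 = 0 \<and> w 1 = 1 \<and> (\<forall>a b. w (a * b) = w a * w b) \<and>
     (\<forall>a b. w (a + b) \<le> max (w a) (w b)) \<and> (\<forall>b\<in>B. w b = H b)"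
proof -
  obtain w where w: "w \<in> B_seminorms" "\<forall>a b. w (a * b) = w a * w b"
    using exists_mult_B_seminorm normalized_norm_in_B_seminorms by blast
  have "w b = H b" if "b \<in> B" for b
    using B_seminormsD(5)[OF w(1) that, of 1] B_seminormsD(2)[OF w(1)] by simp
  then show ?thesis using w B_seminormsD[OF w(1)] B_seminorm_zero[OF w(1)] by blast
qed

end

lemma k_algebra_map_zero: "k_algebra_map emb \<Longrightarrow> emb 0 = 0"
  unfolding k_algebra_map_def by simp

lemma (in bend_point) bend_weight_extends_to_berk:
  assumes emb: "k_algebra_map emb" and spans: "\<And>r. \<exists>bs. set bs \<subseteq> Cb \<and> sum_list bs = r"
  shows "\<exists>w\<in>berk v emb. \<forall>c\<in>Cb. w c = bend_weight f c"
proof -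
  have scalar_in: "emb l * c \<in> Cb" if "c \<in> Cb" for l c
    using scalar_monoid that unfolding scalar_monoid_def by auto
  have zero_in: "0 \<in> Cb" using scalar_in[OF one_in, of 0] k_algebra_map_zero[OF emb] by simp
  have weight_zero: "bend_weight f 0 = 0"
    using bend_weight_scalar[OF one_in, of 0] k_algebra_map_zero[OF emb] nonarch
    unfolding nonarch_abs_def by simp
  interpret spanning_weighted_monoid Cb "bend_weight f"
    using one_in zero_in scalar_monoid bend_weight_mult bend_weight_nonneg weight_zero
      bend_weight_one spans bend_weight_sum_list_le
    by unfold_locales (auto simp: scalar_monoid_def mult_closed_def)
  obtain w where w: "\<forall>x. 0 \<le> w x" "w 0 = 0" "w 1 = 1" "\<forall>a b. w (a * b) = w a * w b"
    "\<forall>a b. w (a + b) \<le> max (w a) (w b)" "\<forall>c\<in>Cb. w c = bend_weight f c"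
    using exists_mult_seminorm_extending by blast
  have "w (emb l) = v l" for l
    using w(6) scalar_in[OF one_in, of l] bend_weight_scalar[OF one_in, of l] bend_weight_one by simp
  then have "w \<in> berk v emb" using w unfolding berk_def by auto
  then show ?thesis using w(6) by blast
qed

lemma bend_weight_in_berk:
  fixes emb :: "'k::field \<Rightarrow> 'r::comm_ring_1"
  assumes "nonarch_abs v" "k_algebra_map emb" "f \<in> bend_hom v emb UNIV"
  shows "bend_weight f \<in> berk v emb"
proof -
  interpret bend_point v emb UNIV f
    using assms scalar_monoid_UNIV by unfold_locales
  have "\<exists>bs. set bs \<subseteq> UNIV \<and> sum_list bs = r" for r :: 'r
    by (intro exI[of _ "[r]"]) simp
  then obtain w where "w \<in> berk v emb" "\<forall>c. w c = bend_weight f c"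
    using bend_weight_extends_to_berk[OF assms(2)] by blast
  then show ?thesis by (metis ext)
qed

lemma berk_to_bend_eq: "berk_to_bend w = restrict (teval w) (fsum UNIV)"
  unfolding berk_to_bend_def teval_def ..

lemma berk_to_bend_in_bend_hom:
  "nonarch_abs v \<Longrightarrow> w \<in> berk v emb \<Longrightarrow> berk_to_bend w \<in> bend_hom v emb UNIV"
  unfolding berk_to_bend_eq by (rule teval_in_bend_hom[OF _ scalar_monoid_UNIV])

lemma bend_weight_berk_to_bend: "w \<in> berk v emb \<Longrightarrow> bend_weight (berk_to_bend w) = w"
  by (rule ext) (simp add: bend_weight_def berk_to_bend_eq tmono_in_fsum teval_tmono berkD(1))

lemma berk_to_bend_bend_weight:
  assumes "nonarch_abs v" "f \<in> bend_hom v emb UNIV"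
  shows "berk_to_bend (bend_weight f) = f"
proof -
  interpret bend_point v emb UNIV f
    using assms scalar_monoid_UNIV by unfold_locales
  show ?thesis unfolding berk_to_bend_eq using bend_hom_eq_teval by simp
qed

lemma scalar_monoid_Bbullet:
  assumes emb: "k_algebra_map emb" and phi: "monoid0_hom phi"
  shows "scalar_monoid emb (Bbullet emb phi)"
proof -
  have "emb c * phi a * (emb c' * phi a') = emb (c * c') * phi (a * a')" for c a c' a'
    using emb phi by (simp add: k_algebra_map_def monoid0_hom_def algebra_simps)
  moreover have "emb l * (emb c * phi a) = emb (l * c) * phi a" for l c a
    using emb by (simp add: k_algebra_map_def algebra_simps)
  moreover have "1 = emb 1 * phi 1"
    using emb phi by (simp add: k_algebra_map_def monoid0_hom_def)
  ultimately show ?thesis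
    unfolding scalar_monoid_def mult_closed_def Bbullet_def by blast
qed

lemma phi_in_Bbullet: "k_algebra_map emb \<Longrightarrow> phi a \<in> Bbullet emb phi"
  unfolding Bbullet_def k_algebra_map_def by (metis (mono_tags, lifting) mem_Collect_eq mult_1)

lemma Bbullet_spans:
  assumes "pi_surjective emb phi"
  shows "\<exists>bs. set bs \<subseteq> Bbullet emb phi \<and> sum_list bs = r"
proof -
  obtain S c where S: "finite S" "r = (\<Sum>a\<in>S. emb (c a) * phi a)"
    using assms unfolding pi_surjective_def by blast
  obtain xs where xs: "set xs = S" "distinct xs" using finite_distinct_list[OF S(1)] by blast
  have "sum_list (map (\<lambda>a. emb (c a) * phi a) xs) = r"
    using S xs by (simp add: sum_list_distinct_conv_sum_set)
  moreover have "set (map (\<lambda>a. emb (c a) * phi a) xs) \<subseteq> Bbullet emb phi"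
    unfolding Bbullet_def by auto
  ultimately show ?thesis by blast
qed

lemma bend_weight_extends_to_berk_Bbullet:
  assumes "nonarch_abs v" "k_algebra_map emb" "monoid0_hom phi" "pi_surjective emb phi"
    and f: "f \<in> bend_hom v emb (Bbullet emb phi)"
  shows "\<exists>w\<in>berk v emb. \<forall>c\<in>Bbullet emb phi. w c = bend_weight f c"
proof -
  interpret bend_point v emb "Bbullet emb phi" f
    using assms scalar_monoid_Bbullet by unfold_locales
  show ?thesis using bend_weight_extends_to_berk[OF assms(2) Bbullet_spans[OF assms(4)]] .
qed

section \<open>Topology\<close>

lemma continuous_map_into_product_subtopology:
  assumes "\<And>x. x \<in> topspace X \<Longrightarrow> g x \<in> S" "\<And>x. x \<in> topspace X \<Longrightarrow> g x \<in> extensional I"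
    "\<And>k. k \<in> I \<Longrightarrow> continuous_map X euclideanreal (\<lambda>x. g x k)"
  shows "continuous_map X (subtopology (product_topology (\<lambda>_. euclideanreal) I) S) g"
  unfolding continuous_map_in_subtopology continuous_map_componentwise using assms by auto

lemma continuous_map_product_subtopology_projection:
  "k \<in> I \<Longrightarrow> continuous_map (subtopology (product_topology (\<lambda>_. euclideanreal) I) S) euclideanreal (\<lambda>x. x k)"
  by (rule continuous_map_from_subtopology)
     (rule continuous_map_product_projection[where X = "\<lambda>_. euclideanreal", simplified])

lemma continuous_map_Max_insert0:
  assumes "finite F" "\<And>m. m \<in> F \<Longrightarrow> continuous_map X euclideanreal (g m)"
  shows "continuous_map X euclideanreal (\<lambda>z. Max (insert (0::real) ((\<lambda>m. g m z) ` F)))"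
  using assms
proof (induction F rule: finite_induct)
  case (insert a F)
  have "Max (insert (0::real) ((\<lambda>m. g m z) ` insert a F)) = max (g a z) (Max (insert 0 ((\<lambda>m. g m z) ` F)))"
    for z
  proof -
    have "insert 0 ((\<lambda>m. g m z) ` insert a F) = insert (g a z) (insert 0 ((\<lambda>m. g m z) ` F))"
      by auto
    then show ?thesis using insert(1) by simp
  qed
  then show ?case using insert by (auto intro: continuous_map_real_max)
qed simp

lemma continuous_map_teval:
  assumes "x \<in> fsum M" "\<And>m. x m \<noteq> 0 \<Longrightarrow> continuous_map X euclideanreal (\<lambda>z. W z m)"
  shows "continuous_map X euclideanreal (\<lambda>z. teval (W z) x)"
  unfolding teval_def teval_set_eq using fsumD(2)[OF assms(1)]
  by (rule continuous_map_Max_insert0) (use assms(2) in \<open>auto intro: continuous_map_real_mult_left\<close>)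

lemma topspace_berk_top: "topspace (berk_top v emb) = berk v emb"
  by (auto simp: berk_top_def topspace_product_topology_alt)

lemma topspace_bend_top: "topspace (bend_top v emb Cb) = bend_hom v emb Cb"
  by (auto simp: bend_top_def topspace_product_topology_alt bend_hom_def extensional_def)

lemma TropKP_top_eq:
  "TropKP_top v emb phi
     = subtopology (product_topology (\<lambda>_. euclideanreal) UNIV) (monhom_T \<inter> tropKP phi ` berk v emb)"
  by (simp add: TropKP_top_def monhom_top_def subtopology_subtopology)

lemma topspace_TropKP_top: "topspace (TropKP_top v emb phi) = monhom_T \<inter> tropKP phi ` berk v emb"
  by (auto simp: TropKP_top_eq topspace_product_topology_alt)

section \<open>The diagram\<close>

lemma continuous_map_berk_to_bend:
  fixes emb :: "'k::field \<Rightarrow> 'r::comm_ring_1"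
  assumes "nonarch_abs v"
  shows "continuous_map (berk_top v emb) (bend_top v emb UNIV) berk_to_bend"
  unfolding bend_top_def[of v emb UNIV]
proof (rule continuous_map_into_product_subtopology)
  show "berk_to_bend w \<in> bend_hom v emb UNIV" if "w \<in> topspace (berk_top v emb)" for w
    using that berk_to_bend_in_bend_hom[OF assms] by (simp add: topspace_berk_top)
  fix x :: "'r \<Rightarrow> real" assume x: "x \<in> fsum UNIV"
  have "continuous_map (berk_top v emb) euclideanreal (\<lambda>w. teval w x)"
    unfolding berk_top_def
    by (rule continuous_map_teval[OF x]) (simp add: continuous_map_product_subtopology_projection)
  then show "continuous_map (berk_top v emb) euclideanreal (\<lambda>w. berk_to_bend w x)"
    using x by (simp add: berk_to_bend_eq)
qed (simp add: berk_to_bend_eq)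

lemma continuous_map_bend_weight:
  assumes "nonarch_abs v" "k_algebra_map emb"
  shows "continuous_map (bend_top v emb UNIV) (berk_top v emb) bend_weight"
  unfolding berk_top_def[of v emb]
proof (rule continuous_map_into_product_subtopology)
  show "bend_weight f \<in> berk v emb" if "f \<in> topspace (bend_top v emb UNIV)" for f
    using that bend_weight_in_berk[OF assms] by (simp add: topspace_bend_top)
  show "continuous_map (bend_top v emb UNIV) euclideanreal (\<lambda>f. bend_weight f r)" for r
    unfolding bend_weight_def bend_top_def
    by (rule continuous_map_product_subtopology_projection) (simp add: tmono_in_fsum)
qed simp

lemma homeomorphic_map_berk_to_bend:
  assumes "nonarch_abs v" "k_algebra_map emb"
  shows "homeomorphic_map (berk_top v emb) (bend_top v emb UNIV) berk_to_bend"
  unfolding homeomorphic_map_maps homeomorphic_maps_def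
proof (intro exI[of _ bend_weight] conjI ballI)
  show "bend_weight (berk_to_bend w) = w" if "w \<in> topspace (berk_top v emb)" for w
    using that bend_weight_berk_to_bend by (simp add: topspace_berk_top)
  show "berk_to_bend (bend_weight f) = f" if "f \<in> topspace (bend_top v emb UNIV)" for f
    using that berk_to_bend_bend_weight[OF assms(1)] by (simp add: topspace_bend_top)
qed (use continuous_map_berk_to_bend[OF assms(1)] continuous_map_bend_weight[OF assms] in auto)

lemma bend_beta_pullback_berk_to_bend:
  "bend_beta_pullback Cb (berk_to_bend w) = restrict (teval w) (fsum Cb)"
  using fsum_mono[of Cb UNIV] by (auto simp: bend_beta_pullback_def berk_to_bend_eq Int_absorb1)

lemma bend_beta_pullback_in_bend_hom:
  assumes v: "nonarch_abs v" and emb: "k_algebra_map emb" and C: "scalar_monoid emb Cb"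
    and g: "g \<in> bend_hom v emb UNIV"
  shows "bend_beta_pullback Cb g \<in> bend_hom v emb Cb"
proof -
  have "bend_beta_pullback Cb g = bend_beta_pullback Cb (berk_to_bend (bend_weight g))"
    using berk_to_bend_bend_weight[OF v g] by simp
  then show ?thesis
    using teval_in_bend_hom[OF v C bend_weight_in_berk[OF v emb g]]
    by (simp add: bend_beta_pullback_berk_to_bend)
qed

lemma continuous_map_bend_beta_pullback:
  assumes "nonarch_abs v" "k_algebra_map emb" "scalar_monoid emb Cb"
  shows "continuous_map (bend_top v emb UNIV) (bend_top v emb Cb) (bend_beta_pullback Cb)"
  unfolding bend_top_def[of v emb Cb]
proof (rule continuous_map_into_product_subtopology)
  show "bend_beta_pullback Cb g \<in> bend_hom v emb Cb" if "g \<in> topspace (bend_top v emb UNIV)" for g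
    using that bend_beta_pullback_in_bend_hom[OF assms] by (simp add: topspace_bend_top)
  fix x assume x: "x \<in> fsum Cb"
  then have "continuous_map (bend_top v emb UNIV) euclideanreal (\<lambda>g. g x)"
    unfolding bend_top_def
    using fsum_mono[of Cb UNIV] by (intro continuous_map_product_subtopology_projection) auto
  then show "continuous_map (bend_top v emb UNIV) euclideanreal (\<lambda>g. bend_beta_pullback Cb g x)"
    using x by (simp add: bend_beta_pullback_def)
qed (simp add: bend_beta_pullback_def)

lemma bend_to_trop_bend_beta_pullback:
  assumes "k_algebra_map emb" "w \<in> berk v emb"
  shows "bend_to_trop phi (bend_beta_pullback (Bbullet emb phi) (berk_to_bend w)) = tropKP phi w"
proof
  fix a
  have "tmono 1 (phi a) \<in> fsum (Bbullet emb phi)"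
    using phi_in_Bbullet[OF assms(1)] by (rule tmono_in_fsum[rotated]) simp
  then show "bend_to_trop phi (bend_beta_pullback (Bbullet emb phi) (berk_to_bend w)) a = tropKP phi w a"
    using berkD(1)[OF assms(2)]
    by (simp add: bend_to_trop_def tropKP_def bend_beta_pullback_berk_to_bend teval_tmono)
qed

lemma tropKP_in_monhom_T: "monoid0_hom phi \<Longrightarrow> w \<in> berk v emb \<Longrightarrow> tropKP phi w \<in> monhom_T"
  unfolding monhom_T_def tropKP_def monoid0_hom_def by (auto simp: berkD)

lemma continuous_map_tropKP:
  assumes "monoid0_hom phi"
  shows "continuous_map (berk_top v emb) (TropKP_top v emb phi) (tropKP phi)"
  unfolding TropKP_top_eq
proof (rule continuous_map_into_product_subtopology)
  show "tropKP phi w \<in> monhom_T \<inter> tropKP phi ` berk v emb" if "w \<in> topspace (berk_top v emb)" for w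
    using that tropKP_in_monhom_T[OF assms] by (simp add: topspace_berk_top)
  show "continuous_map (berk_top v emb) euclideanreal (\<lambda>w. tropKP phi w a)" for a
    unfolding tropKP_def berk_top_def by (simp add: continuous_map_product_subtopology_projection)
qed (simp add: tropKP_def)

lemma bend_hom_Bbullet_eq_bend_beta_pullback:
  assumes v: "nonarch_abs v" and emb: "k_algebra_map emb" and phi: "monoid0_hom phi"
    and surj: "pi_surjective emb phi" and f: "f \<in> bend_hom v emb (Bbullet emb phi)"
  shows "\<exists>w\<in>berk v emb. f = bend_beta_pullback (Bbullet emb phi) (berk_to_bend w)"
proof -
  interpret bend_point v emb "Bbullet emb phi" f
    using v f scalar_monoid_Bbullet[OF emb phi] by unfold_locales
  obtain w where w: "w \<in> berk v emb" "\<forall>c\<in>Bbullet emb phi. w c = bend_weight f c"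
    using bend_weight_extends_to_berk_Bbullet[OF v emb phi surj f] by blast
  have "f = restrict (teval (bend_weight f)) (fsum (Bbullet emb phi))" by (rule bend_hom_eq_teval)
  also have "\<dots> = restrict (teval w) (fsum (Bbullet emb phi))"
    using w(2) by (intro restrict_ext teval_cong) auto
  finally have "f = restrict (teval w) (fsum (Bbullet emb phi))" .
  then show ?thesis using w(1) by (auto simp: bend_beta_pullback_berk_to_bend)
qed

definition Bbullet_rep :: "('k \<Rightarrow> 'r::times) \<Rightarrow> ('a \<Rightarrow> 'r) \<Rightarrow> 'r \<Rightarrow> 'k \<times> 'a" where
  "Bbullet_rep emb phi m = (SOME p. m = emb (fst p) * phi (snd p))"

text \<open>The inverse of \<open>bend_to_trop\<close>: on \<open>Trop\<^sup>K\<^sup>P\<close> the weight \<open>v(c) h(a)\<close> of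
  \<open>emb c * phi a \<in> B\<^sup>\<bullet>\<close> does not depend on the chosen representation.\<close>

definition trop_to_bend ::
    "('k::field \<Rightarrow> real) \<Rightarrow> ('k \<Rightarrow> 'r::comm_ring_1) \<Rightarrow> ('a \<Rightarrow> 'r) \<Rightarrow> ('a \<Rightarrow> real) \<Rightarrow> ('r \<Rightarrow> real) \<Rightarrow> real" where
  "trop_to_bend v emb phi h =
     restrict (teval (\<lambda>m. v (fst (Bbullet_rep emb phi m)) * h (snd (Bbullet_rep emb phi m))))
       (fsum (Bbullet emb phi))"

lemma Bbullet_rep:
  "m \<in> Bbullet emb phi \<Longrightarrow> m = emb (fst (Bbullet_rep emb phi m)) * phi (snd (Bbullet_rep emb phi m))"
  unfolding Bbullet_def Bbullet_rep_def by (rule someI_ex) auto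

lemma trop_to_bend_tropKP:
  assumes "w \<in> berk v emb"
  shows "trop_to_bend v emb phi (tropKP phi w) = bend_beta_pullback (Bbullet emb phi) (berk_to_bend w)"
  unfolding trop_to_bend_def bend_beta_pullback_berk_to_bend
proof (rule restrict_ext, rule teval_cong)
  fix m assume "m \<in> Bbullet emb phi"
  then show "v (fst (Bbullet_rep emb phi m)) * tropKP phi w (snd (Bbullet_rep emb phi m)) = w m"
    using Bbullet_rep[of m emb phi] berkD(4,6)[OF assms] by (metis tropKP_def)
qed

lemma bend_to_trop_in_TropKP:
  assumes v: "nonarch_abs v" and emb: "k_algebra_map emb" and phi: "monoid0_hom phi"
    and surj: "pi_surjective emb phi" and f: "f \<in> bend_hom v emb (Bbullet emb phi)"
  shows "bend_to_trop phi f \<in> monhom_T \<inter> tropKP phi ` berk v emb"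
proof -
  obtain w where w: "w \<in> berk v emb" "f = bend_beta_pullback (Bbullet emb phi) (berk_to_bend w)"
    using bend_hom_Bbullet_eq_bend_beta_pullback[OF assms] by blast
  then show ?thesis
    using bend_to_trop_bend_beta_pullback[OF emb w(1), where phi = phi] tropKP_in_monhom_T[OF phi w(1)]
    by auto
qed

lemma trop_to_bend_in_bend_hom:
  assumes v: "nonarch_abs v" and emb: "k_algebra_map emb" and phi: "monoid0_hom phi"
    and h: "h \<in> tropKP phi ` berk v emb"
  shows "trop_to_bend v emb phi h \<in> bend_hom v emb (Bbullet emb phi)"
proof -
  obtain w where w: "w \<in> berk v emb" "h = tropKP phi w" using h by blast
  then show ?thesis
    using trop_to_bend_tropKP[OF w(1), where phi = phi] berk_to_bend_in_bend_hom[OF v w(1)]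
      bend_beta_pullback_in_bend_hom[OF v emb scalar_monoid_Bbullet[OF emb phi]]
    by simp
qed

lemma continuous_map_bend_to_trop:
  assumes "nonarch_abs v" "k_algebra_map emb" "monoid0_hom phi" "pi_surjective emb phi"
  shows "continuous_map (bend_top v emb (Bbullet emb phi)) (TropKP_top v emb phi) (bend_to_trop phi)"
  unfolding TropKP_top_eq
proof (rule continuous_map_into_product_subtopology)
  show "bend_to_trop phi f \<in> monhom_T \<inter> tropKP phi ` berk v emb"
    if "f \<in> topspace (bend_top v emb (Bbullet emb phi))" for f
    using that bend_to_trop_in_TropKP[OF assms] by (simp add: topspace_bend_top)
  have "tmono 1 (phi a) \<in> fsum (Bbullet emb phi)" for a
    using phi_in_Bbullet[OF assms(2)] by (rule tmono_in_fsum[rotated]) simp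
  then show "continuous_map (bend_top v emb (Bbullet emb phi)) euclideanreal (\<lambda>f. bend_to_trop phi f a)"
    for a
    unfolding bend_to_trop_def bend_top_def by (rule continuous_map_product_subtopology_projection)
qed simp

lemma continuous_map_trop_to_bend:
  assumes "nonarch_abs v" "k_algebra_map emb" "monoid0_hom phi"
  shows "continuous_map (TropKP_top v emb phi) (bend_top v emb (Bbullet emb phi)) (trop_to_bend v emb phi)"
  unfolding bend_top_def[of v emb "Bbullet emb phi"]
proof (rule continuous_map_into_product_subtopology)
  show "trop_to_bend v emb phi h \<in> bend_hom v emb (Bbullet emb phi)"
    if "h \<in> topspace (TropKP_top v emb phi)" for h
    using that trop_to_bend_in_bend_hom[OF assms] by (simp add: topspace_TropKP_top)
  fix x assume x: "x \<in> fsum (Bbullet emb phi)"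
  have "continuous_map (TropKP_top v emb phi) euclideanreal
      (\<lambda>h. teval (\<lambda>m. v (fst (Bbullet_rep emb phi m)) * h (snd (Bbullet_rep emb phi m))) x)"
    unfolding TropKP_top_eq
    by (intro continuous_map_teval[OF x] continuous_map_real_mult_left
        continuous_map_product_subtopology_projection) simp
  then show "continuous_map (TropKP_top v emb phi) euclideanreal (\<lambda>h. trop_to_bend v emb phi h x)"
    using x by (simp add: trop_to_bend_def)
qed (simp add: trop_to_bend_def)

lemma homeomorphic_map_bend_to_trop:
  assumes v: "nonarch_abs v" and emb: "k_algebra_map emb" and phi: "monoid0_hom phi"
    and surj: "pi_surjective emb phi"
  shows "homeomorphic_map (bend_top v emb (Bbullet emb phi)) (TropKP_top v emb phi) (bend_to_trop phi)"
  unfolding homeomorphic_map_maps homeomorphic_maps_def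
proof (intro exI[of _ "trop_to_bend v emb phi"] conjI ballI)
  show "trop_to_bend v emb phi (bend_to_trop phi f) = f"
    if "f \<in> topspace (bend_top v emb (Bbullet emb phi))" for f
  proof -
    have "f \<in> bend_hom v emb (Bbullet emb phi)" using that by (simp add: topspace_bend_top)
    then obtain w where w: "w \<in> berk v emb" "f = bend_beta_pullback (Bbullet emb phi) (berk_to_bend w)"
      using bend_hom_Bbullet_eq_bend_beta_pullback[OF assms] by blast
    then show ?thesis
      using bend_to_trop_bend_beta_pullback[OF emb w(1), where phi = phi]
        trop_to_bend_tropKP[OF w(1), where phi = phi]
      by simp
  qed
  show "bend_to_trop phi (trop_to_bend v emb phi h) = h" if "h \<in> topspace (TropKP_top v emb phi)" for h
  proof -
    have "h \<in> tropKP phi ` berk v emb" using that by (simp add: topspace_TropKP_top)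
    then obtain w where w: "w \<in> berk v emb" "h = tropKP phi w" by blast
    then show ?thesis
      using bend_to_trop_bend_beta_pullback[OF emb w(1), where phi = phi]
        trop_to_bend_tropKP[OF w(1), where phi = phi]
      by simp
  qed
qed (use continuous_map_bend_to_trop[OF assms] continuous_map_trop_to_bend[OF v emb phi] in auto)

theorem theoremC:
  fixes v :: "'k::field \<Rightarrow> real"
    and emb :: "'k \<Rightarrow> 'r::comm_ring_1"
    and phi :: "'a::{comm_monoid_mult,mult_zero,zero_neq_one} \<Rightarrow> 'r"
  assumes "nonarch_abs v"
    and "k_algebra_map emb"
    and "toric_monoid0 TYPE('a)"
    and "monoid0_hom phi"
    and "pi_surjective emb phi"
  shows "homeomorphic_map (berk_top v emb) (bend_top v emb UNIV) berk_to_bend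
       \<and> homeomorphic_map (bend_top v emb (Bbullet emb phi)) (TropKP_top v emb phi) (bend_to_trop phi)
       \<and> continuous_map (berk_top v emb) (TropKP_top v emb phi) (tropKP phi)
       \<and> continuous_map (bend_top v emb UNIV) (bend_top v emb (Bbullet emb phi))
            (bend_beta_pullback (Bbullet emb phi))
       \<and> (\<forall>w\<in>berk v emb.
            bend_to_trop phi (bend_beta_pullback (Bbullet emb phi) (berk_to_bend w)) = tropKP phi w)"
  using homeomorphic_map_berk_to_bend[OF assms(1,2)]
    homeomorphic_map_bend_to_trop[OF assms(1,2,4,5)]
    continuous_map_tropKP[OF assms(4)]
    continuous_map_bend_beta_pullback[OF assms(1,2) scalar_monoid_Bbullet[OF assms(2,4)]]
    bend_to_trop_bend_beta_pullback[OF assms(2)]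
  by blast
end
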